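(* Let $1\le p<2$, $f\in\mathcal H_0$, $u$ the solution of $\partial_tu+\partial J(u)\ni0$, $u(0)=f$, with extinction time $T_{\mathrm{ex}}$, $w(t):=u(t)/a(t)$ with $a(t)=(1-t/T_{\mathrm{ex}})^{1/(2-p)}$, and $\Lambda(t):=pJ(u(t))/\|u(t)\|^p$ for $0<t<T_{\mathrm{ex}}$. Let $w_*$ be an asymptotic profile, i.e. $w_*\in\mathcal H$ with $w(t_k)\to w_*$ strongly for some $t_k\nearrow T_{\mathrm{ex}}$. Then $w_*$ is a ground state if and only if $\lim_{t\nearrow T_{\mathrm{ex}}}\Lambda(t)=\lambda_1$.
   Context: $\mathcal H$ is a real Hilbert space with inner product $\langle\cdot,\cdot\rangle$ and norm $\|\cdot\|$. $J:\mathcal H\to\mathbb R\cup\{\infty\}$ is convex, lower semicontinuous, proper, with dense effective domain, and absolutely $p$-homogeneous: $J(cu)=|c|^pJ(u)$ for $c\ne0$, $J(0)=0$. $\partial J(u)=\{\zeta: J(u)+\langle\zeta,v-u\rangle\le J(v)\ \forall v\}$; $\mathcal N(J)=\{u:J(u)=0\}$; $\mathcal H_0:=\mathcal N(J)^\perp\setminus\{0\}$. Rayleigh quotient $R(u):=pJ(u)/\|u\|^p$; standing coercivity assumption $\lambda_1:=\inf_{u\in\mathcal H_0}R(u)>0$; a ground state is a minimizer of $R$ over $\mathcal H_0$. The gradient flow solution (Brezis) is the unique continuous $u:[0,\infty)\to\mathcal H$, Lipschitz on $[\delta,\infty)$ for all $\delta>0$, right-differentiable on $(0,\infty)$ with $u(0)=f$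 and $\partial_t^+u(t)=-\zeta(t)$, $\zeta(t)$ the minimal-norm element of $\partial J(u(t))$. $T_{\mathrm{ex}}:=\inf\{T>0:u(t)=0\ \forall t\ge T\}$ (finite for $p<2$). *)

theory Defs
  imports "HOL-Analysis.Analysis" "HOL-Library.Extended_Real"
begin

text \<open>Functionals J : H -> R \<union> {\<infinity>} are modelled as ereal-valued functions never taking -\<infinity>.\<close>

definition ereal_convex :: "('a::real_vector \<Rightarrow> ereal) \<Rightarrow> bool" where
  "ereal_convex J \<longleftrightarrow> (\<forall>x y t. 0 \<le> t \<and> t \<le> 1 \<longrightarrow>
      J (t *\<^sub>R x + (1 - t) *\<^sub>R y) \<le> ereal t * J x + ereal (1 - t) * J y)"

definition lower_semicont :: "('a::topological_space \<Rightarrow> ereal) \<Rightarrow> bool" where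
  "lower_semicont J \<longleftrightarrow> (\<forall>x. J x \<le> Liminf (at x) J)"

definition proper_fun :: "('a \<Rightarrow> ereal) \<Rightarrow> bool" where
  "proper_fun J \<longleftrightarrow> (\<forall>u. J u \<noteq> -\<infinity>) \<and> (\<exists>u. J u < \<infinity>)"

definition eff_dom :: "('a \<Rightarrow> ereal) \<Rightarrow> 'a set" where
  "eff_dom J = {u. J u < \<infinity>}"

definition abs_homogeneous :: "real \<Rightarrow> ('a::real_vector \<Rightarrow> ereal) \<Rightarrow> bool" where
  "abs_homogeneous p J \<longleftrightarrow> J 0 = 0 \<and>
     (\<forall>c u. c \<noteq> 0 \<longrightarrow> J (c *\<^sub>R u) = ereal (\<bar>c\<bar> powr p) * J u)"

definition admissible :: "real \<Rightarrow> ('a::{real_inner,complete_space} \<Rightarrow> ereal) \<Rightarrow> bool" where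
  "admissible p J \<longleftrightarrow> ereal_convex J \<and> lower_semicont J \<and> proper_fun J \<and>
     closure (eff_dom J) = UNIV \<and> abs_homogeneous p J"

definition subdiff :: "('a::real_inner \<Rightarrow> ereal) \<Rightarrow> 'a \<Rightarrow> 'a set" where
  "subdiff J u = {\<zeta>. \<forall>v. J u + ereal (\<zeta> \<bullet> (v - u)) \<le> J v}"

definition null_set :: "('a \<Rightarrow> ereal) \<Rightarrow> 'a set" where
  "null_set J = {u. J u = 0}"

definition H0 :: "('a::real_inner \<Rightarrow> ereal) \<Rightarrow> 'a set" where
  "H0 J = orthogonal_comp (null_set J) - {0}"

definition rayleigh :: "real \<Rightarrow> ('a::real_normed_vector \<Rightarrow> ereal) \<Rightarrow> 'a \<Rightarrow> ereal" where
  "rayleigh p J u = ereal p * J u / ereal (norm u powr p)"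

definition lambda1 :: "real \<Rightarrow> ('a::real_inner \<Rightarrow> ereal) \<Rightarrow> ereal" where
  "lambda1 p J = (INF u\<in>H0 J. rayleigh p J u)"

definition ground_state :: "real \<Rightarrow> ('a::real_inner \<Rightarrow> ereal) \<Rightarrow> 'a \<Rightarrow> bool" where
  "ground_state p J w \<longleftrightarrow> w \<in> H0 J \<and> (\<forall>v\<in>H0 J. rayleigh p J w \<le> rayleigh p J v)"

definition min_norm_subgrad :: "('a::real_inner \<Rightarrow> ereal) \<Rightarrow> 'a \<Rightarrow> 'a \<Rightarrow> bool" where
  "min_norm_subgrad J u \<zeta> \<longleftrightarrow> \<zeta> \<in> subdiff J u \<and> (\<forall>\<eta>\<in>subdiff J u. norm \<zeta> \<le> norm \<eta>)"

text \<open>Brezis gradient flow solution of  u' + \<partial>J(u) \<ni> 0, u(0) = f.\<close>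
definition gradient_flow :: "('a::real_inner \<Rightarrow> ereal) \<Rightarrow> 'a \<Rightarrow> (real \<Rightarrow> 'a) \<Rightarrow> bool" where
  "gradient_flow J f u \<longleftrightarrow>
     continuous_on {0..} u \<and>
     (\<forall>\<delta>>0. \<exists>L. L-lipschitz_on {\<delta>..} u) \<and>
     u 0 = f \<and>
     (\<forall>t>0. \<exists>\<zeta>. min_norm_subgrad J (u t) \<zeta> \<and>
               (u has_vector_derivative (- \<zeta>)) (at t within {t..}))"

definition extinction_time :: "(real \<Rightarrow> 'a::zero) \<Rightarrow> real" where
  "extinction_time u = Inf {T. T > 0 \<and> (\<forall>t\<ge>T. u t = 0)}"

end

theory Submission
  imports Defs
begin

text \<open>Along the flow the Rayleigh quotient $\Lambda(t) = R(u(t))$ is nonincreasing (Cauchy--Schwarz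
  together with Euler's identity $\zeta \cdot u = p J(u)$), and $|u|^{2-p}$ decreases with slope
  $(2 - p)\Lambda$. Hence $\Lambda$ has a limit $\Lambda_\infty \ge \lambda_1$ at the extinction time $T$,
  $|u(t)|^{2-p} \sim (2 - p)\Lambda_\infty (T - t)$, so $|w_*|^{2-p} = (2 - p)\Lambda_\infty T$, and lower
  semicontinuity gives $R(w_*) \le \Lambda_\infty$: if $\Lambda_\infty = \lambda_1$, then $w_*$ is a ground state.
  Conversely, if $w_*$ is a ground state, then $J \ge \lambda_1 |\cdot|^p / p$ on $\mathcal N(J)^\perp$ with
  equality on the ray of $w_*$, and the explicit flow of $\lambda_1 |\cdot|^p / p$ along that ray is
  no farther from $u$ at time $T$ than at time $t_k$. As this explicit solution lives longer than $u$
  when $\Lambda_\infty > \lambda_1$, the rescaled distance $|w(t_k) - w_*|$ would stay bounded below.\<close>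

section \<open>Monotonicity from one-sided derivatives\<close>

lemma real_induction_Icc:
  fixes P :: "real \<Rightarrow> bool"
  assumes "a \<le> b" and "P a" and closed: "closed {x\<in>{a..b}. P x}"
    and step: "\<And>x. a \<le> x \<Longrightarrow> x < b \<Longrightarrow> (\<And>y. a \<le> y \<Longrightarrow> y \<le> x \<Longrightarrow> P y) \<Longrightarrow>
      \<forall>\<^sub>F y in at_right x. P y"
  shows "P b"
proof -
  define S where "S = {x\<in>{a..b}. \<forall>y\<in>{a..x}. P y}"
  define s where "s = Sup S"
  have "a \<in> S" using assms(1,2) by (auto simp: S_def)
  have bdd: "bdd_above S" unfolding S_def by (rule bdd_aboveI[of _ b]) auto
  have "a \<le> s" unfolding s_def using \<open>a \<in> S\<close> bdd by (rule cSup_upper)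
  have "s \<le> b" unfolding s_def using \<open>a \<in> S\<close> by (intro cSup_least) (auto simp: S_def)
  have "{a..s} \<subseteq> {x\<in>{a..b}. P x}"
  proof (cases "a < s")
    case True
    have "{a..<s} \<subseteq> {x\<in>{a..b}. P x}"
    proof
      fix y assume y: "y \<in> {a..<s}"
      then obtain x where "x \<in> S" "y < x" using less_cSupD[of S y] \<open>a \<in> S\<close> s_def by auto
      then show "y \<in> {x\<in>{a..b}. P x}" using y unfolding S_def by auto
    qed
    then have "closure {a..<s} \<subseteq> {x\<in>{a..b}. P x}" using closed by (rule closure_minimal)
    then show ?thesis using True by simp
  qed (use \<open>a \<le> s\<close> assms(1,2) in auto)
  then have "s \<in> S" using \<open>a \<le> s\<close> \<open>s \<le> b\<close> unfolding S_def by auto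
  have "s = b"
  proof (rule ccontr)
    assume "s \<noteq> b"
    with \<open>s \<le> b\<close> have "s < b" by simp
    have "\<forall>\<^sub>F y in at_right s. P y"
      using step[OF \<open>a \<le> s\<close> \<open>s < b\<close>] \<open>s \<in> S\<close> unfolding S_def by auto
    then obtain c where "c > s" and c: "\<And>y. s < y \<Longrightarrow> y < c \<Longrightarrow> P y"
      unfolding eventually_at_right_field by blast
    define x where "x = min ((s + c) / 2) b"
    have "x \<in> S"
      using \<open>s \<in> S\<close> \<open>s < b\<close> \<open>c > s\<close> c unfolding S_def x_def by (force simp: not_le)
    then have "x \<le> s" unfolding s_def using bdd by (rule cSup_upper)
    then show False using \<open>s < b\<close> \<open>c > s\<close> unfolding x_def min_def by (auto split: if_splits)
  qed
  then show ?thesis using \<open>s \<in> S\<close> unfolding S_def by auto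
qed

lemma right_Dini_nonpos_imp_decreasing:
  fixes f :: "real \<Rightarrow> real"
  assumes "a \<le> b" and cont: "continuous_on {a..b} f"
    and Dini: "\<And>x e. a < x \<Longrightarrow> x < b \<Longrightarrow> 0 < e \<Longrightarrow> \<forall>\<^sub>F y in at_right x. f y \<le> f x + e * (y - x)"
  shows "f b \<le> f a"
proof -
  \<comment> \<open>The extra slack $e$ lets the induction start at $a$, where only continuity is known.\<close>
  have slack: "f b \<le> f a + e * (b - a + 1)" if "e > 0" for e
  proof (rule real_induction_Icc[OF \<open>a \<le> b\<close>, where P = "\<lambda>y. f y \<le> f a + e * (y - a + 1)"])
    show "f a \<le> f a + e * (a - a + 1)" using \<open>e > 0\<close> by simp
    have "continuous_on {a..b} (\<lambda>y. f y - e * (y - a + 1))" by (intro continuous_intros cont)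
    then have "closed ({a..b} \<inter> (\<lambda>y. f y - e * (y - a + 1)) -` {..f a})"
      by (intro continuous_closed_preimage) auto
    then show "closed {y\<in>{a..b}. f y \<le> f a + e * (y - a + 1)}"
      by (simp add: Int_def vimage_def algebra_simps)
  next
    fix x assume x: "a \<le> x" "x < b" and below: "\<And>y. a \<le> y \<Longrightarrow> y \<le> x \<Longrightarrow> f y \<le> f a + e * (y - a + 1)"
    show "\<forall>\<^sub>F y in at_right x. f y \<le> f a + e * (y - a + 1)"
    proof (cases "x = a")
      case True
      obtain d where "d > 0" and d: "\<And>y. y \<in> {a..b} \<Longrightarrow> dist y a < d \<Longrightarrow> dist (f y) (f a) < e"
        using cont \<open>a \<le> b\<close> \<open>e > 0\<close> unfolding continuous_on_iff by fastforce
      show ?thesis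
        unfolding eventually_at_right_field
      proof (intro exI[of _ "min (a + d) b"] conjI allI impI)
        fix y assume "x < y" "y < min (a + d) b"
        then have "f y < f a + e" using d[of y] True by (auto simp: dist_real_def)
        moreover have "0 \<le> e * (y - a)" using \<open>x < y\<close> True \<open>e > 0\<close> by simp
        ultimately show "f y \<le> f a + e * (y - a + 1)" by (simp add: algebra_simps)
      qed (use True \<open>d > 0\<close> x in auto)
    next
      case False
      then have "\<forall>\<^sub>F y in at_right x. f y \<le> f x + e * (y - x)" using Dini x \<open>e > 0\<close> by simp
      then show ?thesis
        by eventually_elim (use below[of x] x in \<open>simp add: algebra_simps\<close>)
    qed
  qed
  show ?thesis
  proof (rule field_le_epsilon)
    fix d :: real assume "d > 0"
    then show "f b \<le> f a + d" using slack[of "d / (b - a + 1)"] \<open>a \<le> b\<close> by simp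
  qed
qed

lemma right_DERIV_nonpos_imp_Dini:
  fixes f :: "real \<Rightarrow> real"
  assumes "(f has_real_derivative D) (at_right x)" and "D \<le> 0" and "0 < e"
  shows "\<forall>\<^sub>F y in at_right x. f y \<le> f x + e * (y - x)"
proof -
  have "((\<lambda>y. (f y - f x) / (y - x)) \<longlongrightarrow> D) (at_right x)"
    using assms(1) by (simp add: has_field_derivative_iff)
  then have "\<forall>\<^sub>F y in at_right x. (f y - f x) / (y - x) < e"
    by (rule order_tendstoD(2)) (use assms(2,3) in auto)
  moreover have "\<forall>\<^sub>F y in at_right x. x < y" by (rule eventually_at_right_less)
  ultimately show ?thesis by eventually_elim (simp add: divide_less_eq algebra_simps)
qed

lemma right_DERIV_nonpos_imp_decreasing:
  fixes f :: "real \<Rightarrow> real"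
  assumes "a \<le> b" and "continuous_on {a..b} f"
    and "\<And>x. a < x \<Longrightarrow> x < b \<Longrightarrow> (f has_real_derivative f' x) (at_right x)"
    and "\<And>x. a < x \<Longrightarrow> x < b \<Longrightarrow> f' x \<le> 0"
  shows "f b \<le> f a"
proof (rule right_Dini_nonpos_imp_decreasing[OF assms(1,2)])
  fix x e :: real assume "a < x" "x < b" "0 < e"
  then show "\<forall>\<^sub>F y in at_right x. f y \<le> f x + e * (y - x)"
    using right_DERIV_nonpos_imp_Dini assms(3,4) by blast
qed

lemma not_eventually_at_right_imp_sequence:
  fixes t :: real
  assumes "\<not> (\<forall>\<^sub>F r in at_right t. P r)"
  obtains r where "\<And>n. t < r n" and "\<And>n. \<not> P (r n)" and "r \<longlonglongrightarrow> t"
proof -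
  have "\<exists>r. t < r \<and> r < c \<and> \<not> P r" if "t < c" for c
    using assms that unfolding eventually_at_right_field by (meson not_le)
  then have "\<exists>r. t < r \<and> r < t + 1 / (real n + 1) \<and> \<not> P r" for n
    by simp
  then obtain r where r: "\<And>n. t < r n" "\<And>n. r n < t + 1 / (real n + 1)" "\<And>n. \<not> P (r n)"
    by metis
  have "(\<lambda>n. t + 1 / (real n + 1)) \<longlonglongrightarrow> t + 0"
    using LIMSEQ_inverse_real_of_nat by (intro tendsto_add tendsto_const) (simp add: inverse_eq_divide add.commute)
  then have "r \<longlonglongrightarrow> t"
    using r by (intro tendsto_sandwich[of "\<lambda>n. t" r sequentially "\<lambda>n. t + 1 / (real n + 1)"])
      (auto intro!: always_eventually less_imp_le)
  then show ?thesis using r that by blast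
qed

lemma powr_above_tangent:
  fixes p r \<rho> :: real
  assumes p: "1 \<le> p" and "0 \<le> r" and "0 < \<rho>"
  shows "\<rho> powr p + p * \<rho> powr (p - 1) * (r - \<rho>) \<le> r powr p"
proof -
  have \<rho>_pow: "\<rho> powr (p - 1) * \<rho> = \<rho> powr p" using \<open>0 < \<rho>\<close> by (simp add: powr_diff)
  show ?thesis
  proof (cases "r = 0")
    case True
    have "0 \<le> (p - 1) * \<rho> powr p" using p by simp
    then show ?thesis using True \<rho>_pow by (simp add: algebra_simps)
  next
    case False
    have "((\<lambda>x. x powr p) has_real_derivative p * \<rho> powr (p - 1)) (at \<rho> within {0<..})"
      using has_real_derivative_powr[OF \<open>0 < \<rho>\<close>] by (rule has_field_derivative_at_within)
    then have "p * \<rho> powr (p - 1) * (r - \<rho>) \<le> r powr p - \<rho> powr p"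
      using False \<open>0 \<le> r\<close> \<open>0 < \<rho>\<close>
      by (intro convex_on_imp_above_tangent[OF powr_convex[OF p]]) (auto simp: interior_open)
    then show ?thesis by simp
  qed
qed

lemma lower_semicont_imp_le_limit:
  fixes J :: "'a::topological_space \<Rightarrow> ereal"
  assumes "lower_semicont J" and "X \<longlonglongrightarrow> x" and "(\<lambda>n. J (X n)) \<longlonglongrightarrow> c"
  shows "J x \<le> c"
proof (rule ccontr)
  assume "\<not> J x \<le> c"
  then have "c < J x" by simp
  then obtain y where y: "c < y" "y < J x" using dense by blast
  then have "y < Liminf (at x) J" using assms(1) unfolding lower_semicont_def by (meson order.strict_trans2)
  then have "\<forall>\<^sub>F z in at x. y < J z" by (rule less_LiminfD)
  then have "\<forall>\<^sub>F z in nhds x. y < J z"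
    unfolding eventually_at_filter by eventually_elim (use y in auto)
  then have "\<forall>\<^sub>F n in sequentially. y < J (X n)"
    using assms(2) unfolding filterlim_iff by blast
  moreover have "\<forall>\<^sub>F n in sequentially. J (X n) < y"
    using assms(3) y(1) by (rule order_tendstoD(2))
  ultimately have "\<forall>\<^sub>F n in sequentially. False" by eventually_elim simp
  then show False by simp
qed

lemma has_vector_derivative_at_right_quotient:
  fixes f :: "real \<Rightarrow> 'a::real_normed_vector"
  assumes "(f has_vector_derivative D) (at_right x)"
  shows "((\<lambda>y. (1 / (y - x)) *\<^sub>R (f y - f x)) \<longlongrightarrow> D) (at_right x)"
proof -
  have "((\<lambda>y. (1 / norm (y - x)) *\<^sub>R (f y - (f x + (y - x) *\<^sub>R D))) \<longlongrightarrow> 0) (at_right x)"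
    using assms unfolding has_vector_derivative_def has_derivative_within by blast
  then have "((\<lambda>y. (1 / norm (y - x)) *\<^sub>R (f y - (f x + (y - x) *\<^sub>R D)) + D) \<longlongrightarrow> 0 + D) (at_right x)"
    by (intro tendsto_add tendsto_const)
  moreover have "\<forall>\<^sub>F y in at_right x.
      (1 / norm (y - x)) *\<^sub>R (f y - (f x + (y - x) *\<^sub>R D)) + D = (1 / (y - x)) *\<^sub>R (f y - f x)"
    using eventually_at_right_less[of x]
  proof eventually_elim
    fix y assume "x < y"
    then have "norm (y - x) = y - x" and "(1 / (y - x)) *\<^sub>R ((y - x) *\<^sub>R D) = D" by simp_all
    then show "(1 / norm (y - x)) *\<^sub>R (f y - (f x + (y - x) *\<^sub>R D)) + D = (1 / (y - x)) *\<^sub>R (f y - f x)"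
      by (simp only: diff_diff_eq[symmetric] scaleR_right_diff_distrib) simp
  qed
  ultimately show ?thesis by (simp add: tendsto_cong)
qed

lemma has_vector_derivative_at_right_shift:
  fixes f :: "real \<Rightarrow> 'a::real_normed_vector"
  assumes "(f has_vector_derivative D) (at_right (x + h))"
  shows "((\<lambda>t. f (t + h)) has_vector_derivative D) (at_right x)"
proof -
  have "((\<lambda>t. t + h) has_vector_derivative 1) (at x within {x<..})"
    by (auto intro!: derivative_eq_intros)
  moreover have "(\<lambda>t. t + h) ` {x<..} = {x + h<..}"
    by (auto intro: image_eqI[of _ _ "_ - h"])
  then have "(f has_vector_derivative D) (at ((\<lambda>t. t + h) x) within (\<lambda>t. t + h) ` {x<..})"
    using assms by simp
  ultimately have "(f \<circ> (\<lambda>t. t + h) has_vector_derivative 1 *\<^sub>R D) (at x within {x<..})"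
    by (rule vector_diff_chain_within)
  then show ?thesis by (simp add: o_def)
qed

lemma has_real_derivative_inner:
  fixes u v :: "real \<Rightarrow> 'a::real_inner"
  assumes "(u has_vector_derivative u') (at x within S)" and "(v has_vector_derivative v') (at x within S)"
  shows "((\<lambda>t. u t \<bullet> v t) has_real_derivative (u x \<bullet> v' + u' \<bullet> v x)) (at x within S)"
proof -
  have "((\<lambda>t. u t \<bullet> v t) has_derivative (\<lambda>h. u x \<bullet> (h *\<^sub>R v') + (h *\<^sub>R u') \<bullet> v x)) (at x within S)"
    using has_derivative_inner[OF assms[unfolded has_vector_derivative_def]] .
  moreover have "(\<lambda>h. u x \<bullet> (h *\<^sub>R v') + (h *\<^sub>R u') \<bullet> v x) = (\<lambda>h. (u x \<bullet> v' + u' \<bullet> v x) * h)"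
    by (auto simp: algebra_simps)
  ultimately show ?thesis by (simp add: has_field_derivative_def)
qed

lemma monotone_velocities_contract:
  fixes u v a b :: "real \<Rightarrow> 'a::real_inner"
  assumes "s \<le> e" and "continuous_on {s..e} u" and "continuous_on {s..e} v"
    and du: "\<And>t. s < t \<Longrightarrow> t < e \<Longrightarrow> (u has_vector_derivative - a t) (at_right t)"
    and dv: "\<And>t. s < t \<Longrightarrow> t < e \<Longrightarrow> (v has_vector_derivative - b t) (at_right t)"
    and mono: "\<And>t. s < t \<Longrightarrow> t < e \<Longrightarrow> 0 \<le> (a t - b t) \<bullet> (u t - v t)"
  shows "norm (u e - v e) \<le> norm (u s - v s)"
proof -
  have "(u e - v e) \<bullet> (u e - v e) \<le> (u s - v s) \<bullet> (u s - v s)"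
  proof (rule right_DERIV_nonpos_imp_decreasing[OF \<open>s \<le> e\<close>,
        where f' = "\<lambda>t. 2 * ((b t - a t) \<bullet> (u t - v t))"])
    show "continuous_on {s..e} (\<lambda>t. (u t - v t) \<bullet> (u t - v t))"
      by (intro continuous_intros assms)
    fix t assume t: "s < t" "t < e"
    have d: "((\<lambda>t. u t - v t) has_vector_derivative - (a t - b t)) (at_right t)"
      using has_vector_derivative_diff[OF du[OF t] dv[OF t]] by simp
    show "((\<lambda>t. (u t - v t) \<bullet> (u t - v t)) has_real_derivative 2 * ((b t - a t) \<bullet> (u t - v t))) (at_right t)"
      using has_real_derivative_inner[OF d d] by (simp add: inner_commute)
    show "2 * ((b t - a t) \<bullet> (u t - v t)) \<le> 0" using mono[OF t] by (simp add: inner_diff_left)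
  qed
  then show ?thesis by (simp add: norm_le)
qed

section \<open>Nested convex sets in a Hilbert space\<close>

lemma norm_diff_bound_in_convex:
  fixes x y :: "'a::real_inner"
  assumes "convex C" "x \<in> C" "y \<in> C" and min: "\<And>z. z \<in> C \<Longrightarrow> d \<le> norm z" and "0 \<le> d"
  shows "(norm (x - y))\<^sup>2 \<le> 2 * (norm x)\<^sup>2 + 2 * (norm y)\<^sup>2 - 4 * d\<^sup>2"
proof -
  have "(1/2) *\<^sub>R x + (1/2) *\<^sub>R y \<in> C" using assms(1-3) by (rule convexD) auto
  then have "d \<le> norm ((1/2) *\<^sub>R (x + y))" using min by (simp add: scaleR_right_distrib)
  then have "2 * d \<le> norm (x + y)" by simp
  then have "(2 * d)\<^sup>2 \<le> (norm (x + y))\<^sup>2" using \<open>0 \<le> d\<close> by (intro power_mono) auto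
  moreover have "(norm (x - y))\<^sup>2 + (norm (x + y))\<^sup>2 = 2 * (norm x)\<^sup>2 + 2 * (norm y)\<^sup>2"
    by (simp add: power2_norm_eq_inner inner_add_left inner_add_right inner_diff_left
        inner_diff_right inner_commute)
  ultimately show ?thesis by (simp add: power_mult_distrib)
qed

lemma Cauchy_if_norm_diff_le:
  fixes z :: "nat \<Rightarrow> 'a::real_normed_vector"
  assumes bound: "\<And>n m. n \<le> m \<Longrightarrow> (norm (z n - z m))\<^sup>2 \<le> E n" and "E \<longlonglongrightarrow> 0"
  shows "Cauchy z"
proof (rule metric_CauchyI)
  fix e :: real assume "e > 0"
  then obtain M where M: "\<And>n. n \<ge> M \<Longrightarrow> E n < e\<^sup>2"
    using order_tendstoD(2)[OF \<open>E \<longlonglongrightarrow> 0\<close>, of "e\<^sup>2"] by (auto simp: eventually_sequentially)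
  have "dist (z m) (z n) < e" if "m \<ge> M" "n \<ge> M" for m n
  proof -
    have "(norm (z m - z n))\<^sup>2 < e\<^sup>2"
      using bound[of m n] bound[of n m] M[of m] M[of n] that
      by (cases "m \<le> n") (auto simp: norm_minus_commute)
    then show ?thesis using \<open>e > 0\<close> by (simp add: dist_norm power_less_imp_less_base)
  qed
  then show "\<exists>M. \<forall>m\<ge>M. \<forall>n\<ge>M. dist (z m) (z n) < e" by blast
qed

lemma decseq_tendsto_in_closure:
  fixes C :: "nat \<Rightarrow> 'a::first_countable_topology set"
  assumes "decseq C" and "\<And>n. z n \<in> C n" and "z \<longlonglongrightarrow> l"
  shows "l \<in> closure (C n)"
proof -
  have "z (k + n) \<in> C n" for k
    using assms(2)[of "k + n"] assms(1)[unfolded decseq_def, rule_format, of n "k + n"] by auto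
  then show ?thesis
    using LIMSEQ_ignore_initial_segment[OF assms(3), of n] unfolding closure_sequential
    by (intro exI[of _ "\<lambda>k. z (k + n)"]) simp
qed

text \<open>A substitute for weak compactness: points of almost minimal norm in the $C_n$ form a
  Cauchy sequence by the parallelogram law.\<close>
lemma decseq_convex_closure_common_point:
  fixes C :: "nat \<Rightarrow> 'a::{real_inner,complete_space} set"
  assumes cvx: "\<And>n. convex (C n)" and ne: "\<And>n. C n \<noteq> {}" and dec: "decseq C"
    and bnd: "\<And>n. C n \<subseteq> cball 0 B"
  shows "\<exists>z. \<forall>n. z \<in> closure (C n)"
proof -
  define d where "d n = Inf (norm ` C n)" for n
  have bdd: "bdd_below (norm ` C n)" for n by (rule bdd_belowI[of _ 0]) auto
  have d_le: "d n \<le> norm x" if "x \<in> C n" for n x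
    unfolding d_def using bdd that by (intro cInf_lower) auto
  have d_nonneg: "0 \<le> d n" for n
    unfolding d_def using ne[of n] by (intro cInf_greatest) auto
  have "incseq d"
    unfolding incseq_def d_def using ne bdd dec
    by (auto intro!: cInf_superset_mono image_mono simp: decseq_def) blast
  moreover have "d n \<le> B" for n
    using ne[of n] d_le bnd[of n] by (force simp: subset_iff)
  ultimately obtain L where L: "d \<longlonglongrightarrow> L" "\<And>n. d n \<le> L"
    using incseq_convergent[of d B] by blast
  have "\<exists>x\<in>C n. norm x < d n + 1 / (real n + 1)" for n
    using cInf_lessD[of "norm ` C n" "d n + 1 / (real n + 1)"] ne[of n] unfolding d_def by auto
  then obtain z where z: "\<And>n. z n \<in> C n" "\<And>n. norm (z n) < d n + 1 / (real n + 1)" by metis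
  define E where "E n = 4 * ((L + 1 / (real n + 1))\<^sup>2 - (d n)\<^sup>2)" for n
  have E_bound: "(norm (z n - z m))\<^sup>2 \<le> E n" if "n \<le> m" for n m
  proof -
    have "z m \<in> C n" using z(1)[of m] dec \<open>n \<le> m\<close> by (auto simp: decseq_def)
    have "1 / (real m + 1) \<le> 1 / (real n + 1)" using \<open>n \<le> m\<close> by (simp add: frac_le)
    then have "norm (z k) \<le> L + 1 / (real n + 1)" if "k \<in> {n, m}" for k
      using z(2)[of k] L(2)[of k] that by auto
    then have "(norm (z k))\<^sup>2 \<le> (L + 1 / (real n + 1))\<^sup>2" if "k \<in> {n, m}" for k
      using that by (intro power_mono) auto
    note this[of n] this[of m]
    moreover have "(norm (z n - z m))\<^sup>2 \<le> 2 * (norm (z n))\<^sup>2 + 2 * (norm (z m))\<^sup>2 - 4 * (d n)\<^sup>2"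
      using cvx z(1) \<open>z m \<in> C n\<close> d_le d_nonneg by (rule norm_diff_bound_in_convex)
    ultimately show ?thesis unfolding E_def by simp
  qed
  have "(\<lambda>n. 1 / (real n + 1)) \<longlonglongrightarrow> 0"
    using LIMSEQ_inverse_real_of_nat by (simp add: inverse_eq_divide add.commute)
  then have "E \<longlonglongrightarrow> 4 * ((L + 0)\<^sup>2 - L\<^sup>2)"
    unfolding E_def by (intro tendsto_intros L(1))
  then have "E \<longlonglongrightarrow> 0" by simp
  with E_bound have "Cauchy z" by (rule Cauchy_if_norm_diff_le)
  then obtain z_lim where "z \<longlonglongrightarrow> z_lim" using Cauchy_convergent_iff convergent_def by blast
  then show ?thesis using dec z(1) by (blast intro: decseq_tendsto_in_closure)
qed

lemma closure_convex_hull_tail_subset: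
  assumes "closed K" and "convex K" and "\<And>n. N \<le> n \<Longrightarrow> y n \<in> K"
  shows "closure (convex hull (y ` {N..})) \<subseteq> K"
  using assms by (intro closure_minimal hull_minimal) auto

lemma norm_powr_eq_inner_powr:
  fixes x :: "'a::real_inner"
  shows "norm x powr q = (x \<bullet> x) powr (q / 2)"
  by (simp add: norm_eq_sqrt_inner powr_half_sqrt[symmetric] powr_powr)

section \<open>Admissible functionals and their subgradients\<close>

lemma rayleigh_eq:
  fixes x :: "'a::real_normed_vector"
  assumes "x \<noteq> 0" and "J x = ereal j"
  shows "rayleigh p J x = ereal (p * j / norm x powr p)"
  using assms unfolding rayleigh_def by (simp add: divide_ereal_def divide_inverse)

lemma lambda1_le_rayleigh: "x \<in> H0 J \<Longrightarrow> lambda1 p J \<le> rayleigh p J x"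
  unfolding lambda1_def by (rule INF_lower)

lemma rayleigh_le_iff:
  fixes x :: "'a::real_normed_vector"
  assumes "x \<noteq> 0" and "0 < p" and "J x \<noteq> -\<infinity>"
  shows "rayleigh p J x \<le> ereal L \<longleftrightarrow> J x \<le> ereal (L / p * norm x powr p)"
proof (cases "J x")
  case (real j)
  have "p * j / norm x powr p \<le> L \<longleftrightarrow> j \<le> L / p * norm x powr p"
    using assms(1,2) by (simp add: pos_divide_le_eq pos_le_divide_eq field_simps)
  then show ?thesis using rayleigh_eq[of x J j p, OF assms(1) real] real by simp
next
  case PInf
  then show ?thesis using assms(1,2) unfolding rayleigh_def by (simp add: divide_ereal_def)
qed (use assms(3) in simp)

lemma ground_state_iff_rayleigh_le:
  assumes "w \<in> H0 J"
  shows "ground_state p J w \<longleftrightarrow> rayleigh p J w \<le> lambda1 p J"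
  using assms lambda1_le_rayleigh[of _ J p] unfolding ground_state_def lambda1_def
  by (auto intro: INF_greatest order.trans)

locale admissible_functional =
  fixes p :: real and J :: "'a::{real_inner,complete_space} \<Rightarrow> ereal"
  assumes admissible: "admissible p J"
begin

lemma J_zero [simp]: "J 0 = 0"
  using admissible unfolding admissible_def abs_homogeneous_def by auto

lemma J_scaleR: "c \<noteq> 0 \<Longrightarrow> J (c *\<^sub>R u) = ereal (\<bar>c\<bar> powr p) * J u"
  using admissible unfolding admissible_def abs_homogeneous_def by auto

lemma J_scaleR_pos: "0 < c \<Longrightarrow> J (c *\<^sub>R u) = ereal (c powr p) * J u"
  using J_scaleR[of c u] by simp

lemma J_neq_MInf [simp]: "J u \<noteq> -\<infinity>"
  using admissible unfolding admissible_def proper_fun_def by auto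

lemma J_convex: "0 \<le> t \<Longrightarrow> t \<le> 1 \<Longrightarrow>
    J (t *\<^sub>R x + (1 - t) *\<^sub>R y) \<le> ereal t * J x + ereal (1 - t) * J y"
  using admissible unfolding admissible_def ereal_convex_def by auto

lemma J_nonneg: "0 \<le> J u"
proof -
  have "J ((1/2) *\<^sub>R u + (1 - 1/2) *\<^sub>R (-u)) \<le> ereal (1/2) * J u + ereal (1 - 1/2) * J (-u)"
    by (rule J_convex) auto
  moreover have "J (-u) = J u" using J_scaleR[of "-1" u] by simp
  ultimately have "0 \<le> ereal (1/2) * J u + ereal (1/2) * J u" by simp
  then show ?thesis by (cases "J u") auto
qed

lemma subdiff_imp_finite:
  assumes "z \<in> subdiff J u"
  shows "J u = ereal (real_of_ereal (J u))"
proof -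
  have "J u + ereal (z \<bullet> (0 - u)) \<le> J 0" using assms unfolding subdiff_def by blast
  then have "J u \<noteq> \<infinity>" by auto
  then show ?thesis by (cases "J u") auto
qed

lemma subdiff_ineq:
  assumes "z \<in> subdiff J u" and "J v = ereal y"
  shows "real_of_ereal (J u) + z \<bullet> (v - u) \<le> y"
proof -
  have "J u + ereal (z \<bullet> (v - u)) \<le> J v" using assms(1) unfolding subdiff_def by blast
  then show ?thesis using assms(2) subdiff_imp_finite[OF assms(1)]
    by (metis ereal_less_eq(3) plus_ereal.simps(1))
qed

lemma subdiff_monotone:
  assumes "z\<^sub>1 \<in> subdiff J u\<^sub>1" and "z\<^sub>2 \<in> subdiff J u\<^sub>2"
  shows "0 \<le> (z\<^sub>1 - z\<^sub>2) \<bullet> (u\<^sub>1 - u\<^sub>2)"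
proof -
  have "real_of_ereal (J u\<^sub>1) + z\<^sub>1 \<bullet> (u\<^sub>2 - u\<^sub>1) \<le> real_of_ereal (J u\<^sub>2)"
    using subdiff_ineq[OF assms(1) subdiff_imp_finite[OF assms(2)]] .
  moreover have "real_of_ereal (J u\<^sub>2) + z\<^sub>2 \<bullet> (u\<^sub>1 - u\<^sub>2) \<le> real_of_ereal (J u\<^sub>1)"
    using subdiff_ineq[OF assms(2) subdiff_imp_finite[OF assms(1)]] .
  moreover have "(z\<^sub>1 - z\<^sub>2) \<bullet> (u\<^sub>1 - u\<^sub>2) = - (z\<^sub>1 \<bullet> (u\<^sub>2 - u\<^sub>1)) - z\<^sub>2 \<bullet> (u\<^sub>1 - u\<^sub>2)"
    by (simp add: algebra_simps inner_diff_left inner_diff_right)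
  ultimately show ?thesis by linarith
qed

text \<open>Convexity and homogeneity give $J(u + s n) \le 2^{p-1} J(u)$ for every real $s$ when
  $J(n) = 0$, so the linear function $s \mapsto s\, z \cdot n$ is bounded above.\<close>
lemma subdiff_orthogonal_null_set:
  assumes z: "z \<in> subdiff J u" and "J n = 0"
  shows "z \<bullet> n = 0"
proof -
  define j where "j = real_of_ereal (J u)"
  have Ju: "J u = ereal j" unfolding j_def by (rule subdiff_imp_finite[OF z])
  have bound: "j + s * (z \<bullet> n) \<le> 2 powr (p - 1) * j" for s
  proof -
    have "J ((1/2) *\<^sub>R (2 *\<^sub>R u) + (1 - 1/2) *\<^sub>R ((2 * s) *\<^sub>R n)) \<le>
        ereal (1/2) * J (2 *\<^sub>R u) + ereal (1 - 1/2) * J ((2 * s) *\<^sub>R n)"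
      by (rule J_convex) auto
    moreover have "(1/2) *\<^sub>R (2 *\<^sub>R u) + (1 - 1/2) *\<^sub>R ((2 * s) *\<^sub>R n) = u + s *\<^sub>R n"
      by (simp add: algebra_simps)
    moreover have "J (2 *\<^sub>R u) = ereal (2 powr p * j)" using J_scaleR_pos[of 2 u] Ju by simp
    moreover have "J ((2 * s) *\<^sub>R n) = 0"
      using J_scaleR[of "2 * s" n] \<open>J n = 0\<close> by (cases "s = 0") auto
    ultimately have "J (u + s *\<^sub>R n) \<le> ereal (1/2) * ereal (2 powr p * j)" by simp
    also have "\<dots> = ereal (2 powr (p - 1) * j)" by (simp add: powr_diff)
    finally have "J (u + s *\<^sub>R n) \<le> ereal (2 powr (p - 1) * j)" .
    then show ?thesis using subdiff_ineq[OF z, of "u + s *\<^sub>R n"] Ju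
      by (cases "J (u + s *\<^sub>R n)") auto
  qed
  show ?thesis
  proof (rule ccontr)
    assume "z \<bullet> n \<noteq> 0"
    then have "(2 powr (p - 1) * j - j + 1) / (z \<bullet> n) * (z \<bullet> n) = 2 powr (p - 1) * j - j + 1"
      by simp
    then show False using bound[of "(2 powr (p - 1) * j - j + 1) / (z \<bullet> n)"] by simp
  qed
qed

text \<open>Euler's identity. The subgradient inequality along the ray $s u$ gives
  $(s - 1)\, z \cdot u \le (s^p - 1) J(u)$; letting $s \to 1$ from both sides yields equality with
  the derivative $p J(u)$.\<close>
lemma subdiff_inner_self:
  assumes z: "z \<in> subdiff J u"
  shows "z \<bullet> u = p * real_of_ereal (J u)"
proof -
  define j where "j = real_of_ereal (J u)"
  have Ju: "J u = ereal j" unfolding j_def by (rule subdiff_imp_finite[OF z])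
  have ray: "(s - 1) * (z \<bullet> u) \<le> (s powr p - 1) * j" if "s > 0" for s
  proof -
    have "J (s *\<^sub>R u) = ereal (s powr p * j)" using J_scaleR_pos[OF that, of u] Ju by simp
    then have "j + z \<bullet> (s *\<^sub>R u - u) \<le> s powr p * j"
      using subdiff_ineq[OF z] unfolding j_def by blast
    then show ?thesis by (simp add: inner_diff_right algebra_simps)
  qed
  have "((\<lambda>s. s powr p) has_real_derivative p * 1 powr (p - 1)) (at 1)"
    using has_real_derivative_powr[of 1 p] by simp
  then have "((\<lambda>s. (s powr p - 1) / (s - 1)) \<longlongrightarrow> p) (at 1)"
    by (simp add: has_field_derivative_iff)
  then have quot: "((\<lambda>s. (s powr p - 1) / (s - 1) * j) \<longlongrightarrow> p * j) (at 1)"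
    by (intro tendsto_mult tendsto_const)
  have "z \<bullet> u \<le> p * j"
  proof (rule tendsto_le[OF _ tendsto_mono[OF at_within_le_at quot] tendsto_const])
    show "\<forall>\<^sub>F s in at_right 1. z \<bullet> u \<le> (s powr p - 1) / (s - 1) * j"
      using eventually_at_right_less[of 1]
      by eventually_elim (use ray in \<open>simp add: field_simps\<close>)
  qed simp
  moreover have "p * j \<le> z \<bullet> u"
  proof (rule tendsto_le[OF _ tendsto_const tendsto_mono[OF at_within_le_at quot]])
    have "\<forall>\<^sub>F s in at_left 1. s \<in> {0<..<1::real}" by (rule eventually_at_left_real) simp
    then show "\<forall>\<^sub>F s in at_left 1. (s powr p - 1) / (s - 1) * j \<le> z \<bullet> u"
      by eventually_elim (use ray in \<open>simp add: field_simps\<close>)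
  qed simp
  ultimately show ?thesis unfolding j_def by simp
qed

lemma convex_subdiff: "convex (subdiff J u)"
proof (rule convexI)
  fix z\<^sub>1 z\<^sub>2 and s t :: real
  assume z: "z\<^sub>1 \<in> subdiff J u" "z\<^sub>2 \<in> subdiff J u" and st: "0 \<le> s" "0 \<le> t" "s + t = 1"
  have Ju: "J u = ereal (real_of_ereal (J u))" using subdiff_imp_finite[OF z(1)] .
  show "s *\<^sub>R z\<^sub>1 + t *\<^sub>R z\<^sub>2 \<in> subdiff J u"
    unfolding subdiff_def
  proof (intro CollectI allI)
    fix v
    show "J u + ereal ((s *\<^sub>R z\<^sub>1 + t *\<^sub>R z\<^sub>2) \<bullet> (v - u)) \<le> J v"
    proof (cases "J v")
      case (real y)
      have "s * (real_of_ereal (J u) + z\<^sub>1 \<bullet> (v - u)) + t * (real_of_ereal (J u) + z\<^sub>2 \<bullet> (v - u))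
          \<le> s * y + t * y"
        using subdiff_ineq[OF z(1) real] subdiff_ineq[OF z(2) real] st
        by (intro add_mono mult_left_mono) auto
      moreover have "s * (real_of_ereal (J u) + z\<^sub>1 \<bullet> (v - u)) + t * (real_of_ereal (J u) + z\<^sub>2 \<bullet> (v - u))
          = (s + t) * real_of_ereal (J u) + (s *\<^sub>R z\<^sub>1 + t *\<^sub>R z\<^sub>2) \<bullet> (v - u)"
        by (simp add: inner_add_left algebra_simps)
      moreover have "s * y + t * y = (s + t) * y" by (simp add: algebra_simps)
      ultimately have "real_of_ereal (J u) + (s *\<^sub>R z\<^sub>1 + t *\<^sub>R z\<^sub>2) \<bullet> (v - u) \<le> y"
        using st(3) by simp
      then show ?thesis using Ju real by (metis ereal_less_eq(3) plus_ereal.simps(1))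
    qed simp_all
  qed
qed

text \<open>The midpoint $(z + m)/2$ is again a subgradient, so its norm is at least $|m|$; with
  $|z| \le |m|$ the parallelogram law forces $z = m$.\<close>
lemma min_norm_subgrad_unique:
  assumes m: "min_norm_subgrad J u m" and "z \<in> subdiff J u" and "norm z \<le> norm m"
  shows "z = m"
proof -
  have "m \<in> subdiff J u" using m unfolding min_norm_subgrad_def by blast
  then have "(1/2) *\<^sub>R z + (1/2) *\<^sub>R m \<in> subdiff J u"
    using \<open>z \<in> subdiff J u\<close> by (intro convexD[OF convex_subdiff]) auto
  then have "norm m \<le> norm ((1/2) *\<^sub>R z + (1/2) *\<^sub>R m)"
    using m unfolding min_norm_subgrad_def by blast
  then have "(2 * norm m)\<^sup>2 \<le> (norm (z + m))\<^sup>2"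
    by (intro power_mono) (auto simp flip: scaleR_right_distrib)
  then have "4 * (m \<bullet> m) \<le> (z + m) \<bullet> (z + m)"
    by (simp add: power2_norm_eq_inner power_mult_distrib)
  moreover have "z \<bullet> z \<le> m \<bullet> m" using \<open>norm z \<le> norm m\<close> by (simp add: norm_le)
  moreover have "(z - m) \<bullet> (z - m) = 2 * (z \<bullet> z) + 2 * (m \<bullet> m) - (z + m) \<bullet> (z + m)"
    by (simp add: inner_add_left inner_add_right inner_diff_left inner_diff_right inner_commute[of m z])
  ultimately have "(z - m) \<bullet> (z - m) \<le> 0" by linarith
  then have "(z - m) \<bullet> (z - m) = 0" by (meson inner_ge_zero order_antisym)
  then show ?thesis by simp
qed

lemma approximate_subgradients_limit:
  assumes Ju: "J u = ereal j" and approx: "\<And>n v. ereal (j + y n \<bullet> (v - u) - e n) \<le> J v"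
    and "e \<longlonglongrightarrow> 0" and z: "\<And>N. z \<in> closure (convex hull (y ` {N..}))"
  shows "z \<in> subdiff J u"
  unfolding subdiff_def
proof (intro CollectI allI)
  fix v
  show "J u + ereal (z \<bullet> (v - u)) \<le> J v"
  proof (cases "J v")
    case (real jv)
    have "(v - u) \<bullet> z \<le> jv - j + \<eta>" if "\<eta> > 0" for \<eta>
    proof -
      define K where "K = {x. (v - u) \<bullet> x \<le> jv - j + \<eta>}"
      obtain N where N: "\<And>n. n \<ge> N \<Longrightarrow> \<bar>e n\<bar> < \<eta>"
        using \<open>e \<longlonglongrightarrow> 0\<close> \<open>\<eta> > 0\<close> unfolding LIMSEQ_def dist_real_def by auto
      have "y n \<in> K" if "N \<le> n" for n
        using approx[of n v] real N[OF that] by (simp add: K_def inner_commute)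
      then have "closure (convex hull (y ` {N..})) \<subseteq> K"
        by (intro closure_convex_hull_tail_subset) (auto simp: K_def closed_halfspace_le convex_halfspace_le)
      then show ?thesis using z[of N] unfolding K_def by blast
    qed
    then have "j + z \<bullet> (v - u) \<le> jv" using field_le_epsilon by (force simp: inner_commute)
    then show ?thesis using Ju real by simp
  qed simp_all
qed

lemma J_ge_lambda1_norm_powr:
  assumes "x \<in> orthogonal_comp (null_set J)" and "ereal L \<le> lambda1 p J" and "0 < p"
  shows "ereal (L * norm x powr p / p) \<le> J x"
proof (cases "x = 0")
  case False
  then have "x \<in> H0 J" using assms(1) unfolding H0_def by simp
  then have "ereal L \<le> rayleigh p J x"
    using lambda1_le_rayleigh[of x J p] \<open>ereal L \<le> lambda1 p J\<close> by simp
  then show ?thesis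
  proof (cases "J x")
    case (real j)
    have "L \<le> p * j / norm x powr p"
      using \<open>ereal L \<le> rayleigh p J x\<close> rayleigh_eq[of x J j p, OF False real] by simp
    then show ?thesis
      using real False \<open>0 < p\<close> by (simp add: pos_le_divide_eq pos_divide_le_eq mult.commute)
  qed simp_all
qed simp

text \<open>The lower bound $J(x) \ge \lambda |x|^p / p$ on $\mathcal N(J)^\perp$, weakened to its tangent
  at $\rho e$ in the direction $e$.\<close>
lemma J_ge_tangent_bound:
  assumes "norm e = 1" and "x \<in> orthogonal_comp (null_set J)" and "0 < \<rho>"
    and "ereal L \<le> lambda1 p J" and "0 \<le> L" and "1 \<le> p"
  shows "ereal (L / p * \<rho> powr p + L * \<rho> powr (p - 1) * (e \<bullet> x - \<rho>)) \<le> J x"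
proof -
  have "e \<bullet> x \<le> norm x" using norm_cauchy_schwarz[of e x] \<open>norm e = 1\<close> by simp
  then have "L / p * \<rho> powr p + L * \<rho> powr (p - 1) * (e \<bullet> x - \<rho>)
      \<le> L / p * \<rho> powr p + L * \<rho> powr (p - 1) * (norm x - \<rho>)"
    using \<open>0 \<le> L\<close> by (intro add_left_mono mult_left_mono) auto
  also have "\<dots> = L / p * (\<rho> powr p + p * \<rho> powr (p - 1) * (norm x - \<rho>))"
    using \<open>1 \<le> p\<close> by (simp add: distrib_left)
  also have "\<dots> \<le> L / p * norm x powr p"
    using powr_above_tangent[OF \<open>1 \<le> p\<close> norm_ge_zero \<open>0 < \<rho>\<close>] \<open>0 \<le> L\<close> \<open>1 \<le> p\<close>
    by (intro mult_left_mono) auto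
  finally have "ereal (L / p * \<rho> powr p + L * \<rho> powr (p - 1) * (e \<bullet> x - \<rho>)) \<le> ereal (L * norm x powr p / p)"
    by simp
  also have "\<dots> \<le> J x" using J_ge_lambda1_norm_powr[OF assms(2,4)] \<open>1 \<le> p\<close> by simp
  finally show ?thesis .
qed

end

section \<open>The subgradient flow\<close>

locale subgradient_flow = admissible_functional +
  fixes u :: "real \<Rightarrow> 'a::{real_inner,complete_space}" and \<zeta> :: "real \<Rightarrow> 'a"
  assumes p_ge_1: "1 \<le> p" and p_less_2: "p < 2"
    and u_initial: "u 0 \<in> H0 J"
    and u_cont: "continuous_on {0..} u"
    and \<zeta>_min_norm: "\<And>t. 0 < t \<Longrightarrow> min_norm_subgrad J (u t) (\<zeta> t)"
    and u_deriv: "\<And>t. 0 < t \<Longrightarrow> (u has_vector_derivative - \<zeta> t) (at_right t)"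
begin

abbreviation energy :: "real \<Rightarrow> real" where "energy t \<equiv> real_of_ereal (J (u t))"

lemma \<zeta>_subdiff: "0 < t \<Longrightarrow> \<zeta> t \<in> subdiff J (u t)"
  using \<zeta>_min_norm unfolding min_norm_subgrad_def by blast

lemma J_u: "0 < t \<Longrightarrow> J (u t) = ereal (energy t)"
  using subdiff_imp_finite[OF \<zeta>_subdiff] .

lemma energy_nonneg: "0 \<le> energy t"
  using J_nonneg[of "u t"] by (simp add: real_of_ereal_pos)

lemma continuous_on_u: "0 \<le> a \<Longrightarrow> continuous_on {a..b} u"
  using u_cont by (rule continuous_on_subset) auto

lemma isCont_u: "0 < t \<Longrightarrow> isCont u t"
  using u_cont by (rule continuous_on_interior) (simp add: interior_real_atLeast)

text \<open>The flow started at time $h$ later is again a solution; contraction of the two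
  solutions makes the forward difference quotients, and hence $|\zeta|$, nonincreasing.\<close>
lemma norm_\<zeta>_decreasing:
  assumes "0 < s" and "s \<le> t"
  shows "norm (\<zeta> t) \<le> norm (\<zeta> s)"
proof -
  have shift: "norm (u t - u (t + h)) \<le> norm (u s - u (s + h))" if "h > 0" for h
  proof (rule monotone_velocities_contract[OF \<open>s \<le> t\<close>, where a = \<zeta> and b = "\<lambda>r. \<zeta> (r + h)"])
    show "continuous_on {s..t} u" using continuous_on_u \<open>0 < s\<close> by simp
    show "continuous_on {s..t} (\<lambda>r. u (r + h))"
      using u_cont by (rule continuous_on_compose2) (use \<open>0 < s\<close> that in \<open>auto intro!: continuous_intros\<close>)
    fix r assume r: "s < r" "r < t"
    show "(u has_vector_derivative - \<zeta> r) (at_right r)" using u_deriv r \<open>0 < s\<close> by simp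
    show "((\<lambda>r. u (r + h)) has_vector_derivative - \<zeta> (r + h)) (at_right r)"
      using u_deriv[of "r + h"] r \<open>0 < s\<close> that by (intro has_vector_derivative_at_right_shift) simp
    show "0 \<le> (\<zeta> r - \<zeta> (r + h)) \<bullet> (u r - u (r + h))"
      using r \<open>0 < s\<close> that by (intro subdiff_monotone \<zeta>_subdiff) auto
  qed
  have quotient: "((\<lambda>h. norm ((1 / h) *\<^sub>R (u (x + h) - u x))) \<longlongrightarrow> norm (\<zeta> x)) (at_right 0)"
    if "0 < x" for x
  proof -
    have "((\<lambda>y. (1 / (y - x)) *\<^sub>R (u y - u x)) \<longlongrightarrow> - \<zeta> x) (at_right x)"
      using u_deriv[OF that] by (rule has_vector_derivative_at_right_quotient)
    then have "((\<lambda>h. (1 / h) *\<^sub>R (u (x + h) - u x)) \<longlongrightarrow> - \<zeta> x) (at_right 0)"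
      unfolding filterlim_at_right_to_0[of _ _ x] by (simp add: add.commute)
    then show ?thesis using tendsto_norm by fastforce
  qed
  show ?thesis
  proof (rule tendsto_le[OF _ quotient quotient])
    show "\<forall>\<^sub>F h in at_right 0. norm ((1 / h) *\<^sub>R (u (t + h) - u t)) \<le> norm ((1 / h) *\<^sub>R (u (s + h) - u s))"
      using eventually_at_right_less[of 0]
      by eventually_elim (use shift in \<open>simp add: norm_minus_commute divide_right_mono\<close>)
  qed (use \<open>0 < s\<close> \<open>s \<le> t\<close> in auto)
qed

lemma \<zeta>_approximate_subgradient:
  assumes "0 < t" and "t < r"
  shows "ereal (energy t + \<zeta> r \<bullet> (v - u t) - 2 * norm (\<zeta> t) * norm (u r - u t)) \<le> J v"
proof (cases "J v")
  case (real y)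
  have "energy r + \<zeta> r \<bullet> (v - u r) \<le> y"
    using subdiff_ineq[OF \<zeta>_subdiff real] assms by simp
  moreover have "energy t + \<zeta> t \<bullet> (u r - u t) \<le> energy r"
    using subdiff_ineq[OF \<zeta>_subdiff[OF \<open>0 < t\<close>] J_u] assms by simp
  moreover have "(\<zeta> r - \<zeta> t) \<bullet> (u r - u t) \<le> 2 * norm (\<zeta> t) * norm (u r - u t)"
  proof -
    have "(\<zeta> r - \<zeta> t) \<bullet> (u r - u t) \<le> norm (\<zeta> r - \<zeta> t) * norm (u r - u t)"
      by (rule norm_cauchy_schwarz)
    also have "\<dots> \<le> (norm (\<zeta> r) + norm (\<zeta> t)) * norm (u r - u t)"
      by (intro mult_right_mono norm_triangle_ineq4) simp
    also have "\<dots> \<le> 2 * norm (\<zeta> t) * norm (u r - u t)"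
      using norm_\<zeta>_decreasing[of t r] assms by (intro mult_right_mono) auto
    finally show ?thesis .
  qed
  ultimately have "energy t + \<zeta> r \<bullet> (v - u t) - 2 * norm (\<zeta> t) * norm (u r - u t) \<le> y"
    by (simp add: inner_diff_left inner_diff_right)
  then show ?thesis using real by simp
qed simp_all

text \<open>Right continuity of $\zeta$ in the weak sense. Otherwise some $\zeta(r_n)$, $r_n \searrow t$,
  stay a distance $\delta$ below $|\zeta(t)|^2$ in direction $\zeta(t)$; a common point of the closed
  convex hulls of their tails is a subgradient at $u(t)$ of norm at most $|\zeta(t)|$, hence
  equal to the minimal-norm subgradient $\zeta(t)$, which contradicts the gap.\<close>
lemma \<zeta>_inner_eventually_ge:
  assumes "0 < t" and "0 < \<delta>"
  shows "\<forall>\<^sub>F r in at_right t. \<zeta> t \<bullet> \<zeta> t - \<delta> < \<zeta> r \<bullet> \<zeta> t"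
proof (rule ccontr)
  define m where "m = \<zeta> t"
  assume "\<not> ?thesis"
  then obtain r where r: "\<And>n. t < r n" and "r \<longlonglongrightarrow> t"
    and gap: "\<And>n. \<zeta> (r n) \<bullet> m \<le> m \<bullet> m - \<delta>"
    unfolding m_def by (rule not_eventually_at_right_imp_sequence) (auto simp: not_less)
  then have "(\<lambda>n. u (r n)) \<longlonglongrightarrow> u t" using isCont_tendsto_compose[OF isCont_u[OF \<open>0 < t\<close>]] by blast
  then have "(\<lambda>n. 2 * norm m * norm (u (r n) - u t)) \<longlonglongrightarrow> 2 * norm m * norm (u t - u t)"
    by (intro tendsto_intros)
  then have err: "(\<lambda>n. 2 * norm m * norm (u (r n) - u t)) \<longlonglongrightarrow> 0" by simp
  have bounded: "norm (\<zeta> (r n)) \<le> norm m" for n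
    unfolding m_def using norm_\<zeta>_decreasing[of t "r n"] r(1)[of n] \<open>0 < t\<close> by simp
  define C where "C N = convex hull ((\<lambda>n. \<zeta> (r n)) ` {N..})" for N
  obtain z where z: "\<And>N. z \<in> closure (C N)"
  proof -
    have "\<exists>z. \<forall>N. z \<in> closure (C N)"
    proof (rule decseq_convex_closure_common_point[where B = "norm m"])
      show "decseq C" unfolding C_def decseq_def by (auto intro!: hull_mono image_mono)
      show "C N \<subseteq> cball 0 (norm m)" for N
        unfolding C_def using bounded by (intro hull_minimal) (auto simp: convex_cball)
    qed (auto simp: C_def)
    then show ?thesis using that by blast
  qed
  have "z \<in> subdiff J (u t)"
    using J_u[OF \<open>0 < t\<close>] \<zeta>_approximate_subgradient[OF \<open>0 < t\<close> r(1)] err z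
    unfolding C_def m_def by (rule approximate_subgradients_limit)
  moreover have "norm z \<le> norm m"
    using closure_convex_hull_tail_subset[of "cball 0 (norm m)" 0 "\<lambda>n. \<zeta> (r n)"] z[of 0] bounded
    unfolding C_def by (auto simp: convex_cball)
  ultimately have "z = m"
    using \<zeta>_min_norm[OF \<open>0 < t\<close>] unfolding m_def by (intro min_norm_subgrad_unique) auto
  moreover have "closure (C 0) \<subseteq> {x. m \<bullet> x \<le> m \<bullet> m - \<delta>}"
    unfolding C_def using gap inner_commute[of m "\<zeta> (r _)"]
    by (intro closure_convex_hull_tail_subset) (auto simp: closed_halfspace_le convex_halfspace_le)
  then have "m \<bullet> z \<le> m \<bullet> m - \<delta>" using z[of 0] by blast
  ultimately show False using \<open>0 < \<delta>\<close> by simp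
qed

lemma \<zeta>_inner_tendsto:
  assumes "0 < t"
  shows "((\<lambda>r. \<zeta> r \<bullet> \<zeta> t) \<longlongrightarrow> \<zeta> t \<bullet> \<zeta> t) (at_right t)"
proof (rule order_tendstoI)
  fix a assume "a < \<zeta> t \<bullet> \<zeta> t"
  then show "\<forall>\<^sub>F r in at_right t. a < \<zeta> r \<bullet> \<zeta> t"
    using \<zeta>_inner_eventually_ge[OF assms, of "\<zeta> t \<bullet> \<zeta> t - a"] by simp
next
  fix a assume "\<zeta> t \<bullet> \<zeta> t < a"
  have le: "\<zeta> r \<bullet> \<zeta> t \<le> \<zeta> t \<bullet> \<zeta> t" if "t < r" for r
  proof -
    have "\<zeta> r \<bullet> \<zeta> t \<le> norm (\<zeta> r) * norm (\<zeta> t)" by (rule norm_cauchy_schwarz)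
    also have "\<dots> \<le> norm (\<zeta> t) * norm (\<zeta> t)"
      using norm_\<zeta>_decreasing[of t r] assms that by (intro mult_right_mono) auto
    finally show ?thesis by (simp add: dot_square_norm power2_eq_square)
  qed
  show "\<forall>\<^sub>F r in at_right t. \<zeta> r \<bullet> \<zeta> t < a"
    using eventually_at_right_less[of t] by eventually_elim (use le \<open>\<zeta> t \<bullet> \<zeta> t < a\<close> in force)
qed

text \<open>The chain rule $\frac{d}{dt} J(u) = -|\zeta|^2$ from the right, squeezed between the
  subgradient inequalities at $t$ and at $r \searrow t$.\<close>
lemma energy_right_deriv:
  assumes "0 < t"
  shows "(energy has_real_derivative - (\<zeta> t \<bullet> \<zeta> t)) (at_right t)"
proof -
  define m where "m = \<zeta> t"
  define Q where "Q r = (1 / (r - t)) *\<^sub>R (u r - u t)" for r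
  have Q: "(Q \<longlongrightarrow> - m) (at_right t)"
    unfolding Q_def m_def using u_deriv[OF assms] by (rule has_vector_derivative_at_right_quotient)
  have lower: "((\<lambda>r. m \<bullet> Q r) \<longlongrightarrow> - (m \<bullet> m)) (at_right t)"
    using tendsto_inner[OF tendsto_const Q] by simp
  have "((\<lambda>r. norm (Q r + m)) \<longlongrightarrow> norm (- m + m)) (at_right t)"
    by (intro tendsto_intros Q)
  then have "((\<lambda>r. norm m * norm (Q r + m) - \<zeta> r \<bullet> m) \<longlongrightarrow> norm m * 0 - m \<bullet> m) (at_right t)"
    using \<zeta>_inner_tendsto[OF assms] unfolding m_def by (intro tendsto_diff tendsto_mult_left) simp_all
  then have upper: "((\<lambda>r. norm m * norm (Q r + m) - \<zeta> r \<bullet> m) \<longlongrightarrow> - (m \<bullet> m)) (at_right t)"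
    by simp
  have "((\<lambda>r. (energy r - energy t) / (r - t)) \<longlongrightarrow> - (m \<bullet> m)) (at_right t)"
  proof (rule tendsto_sandwich[OF _ _ lower upper])
    show "\<forall>\<^sub>F r in at_right t. m \<bullet> Q r \<le> (energy r - energy t) / (r - t)"
      using eventually_at_right_less[of t]
    proof eventually_elim
      case (elim r)
      have "energy t + m \<bullet> (u r - u t) \<le> energy r"
        unfolding m_def using subdiff_ineq[OF \<zeta>_subdiff J_u] elim assms by simp
      then show ?case unfolding Q_def using elim by (simp add: divide_right_mono)
    qed
    show "\<forall>\<^sub>F r in at_right t. (energy r - energy t) / (r - t) \<le> norm m * norm (Q r + m) - \<zeta> r \<bullet> m"
      using eventually_at_right_less[of t]
    proof eventually_elim
      case (elim r)
      have "energy r + \<zeta> r \<bullet> (u t - u r) \<le> energy t"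
        using subdiff_ineq[OF \<zeta>_subdiff J_u[OF assms]] elim assms by simp
      then have "(energy r - energy t) / (r - t) \<le> \<zeta> r \<bullet> Q r"
        unfolding Q_def using elim by (simp add: inner_diff_right divide_right_mono)
      also have "\<dots> = \<zeta> r \<bullet> (Q r + m) - \<zeta> r \<bullet> m" by (simp add: inner_add_right)
      also have "\<dots> \<le> norm (\<zeta> r) * norm (Q r + m) - \<zeta> r \<bullet> m"
        using norm_cauchy_schwarz[of "\<zeta> r" "Q r + m"] by simp
      also have "\<dots> \<le> norm m * norm (Q r + m) - \<zeta> r \<bullet> m"
        using norm_\<zeta>_decreasing[of t r] elim assms unfolding m_def by (simp add: mult_right_mono)
      finally show ?case .
    qed
  qed
  then show ?thesis unfolding m_def by (simp add: has_field_derivative_iff)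
qed

lemma energy_lipschitz:
  assumes "0 < a" and "a \<le> r" and "a \<le> s"
  shows "\<bar>energy r - energy s\<bar> \<le> norm (\<zeta> a) * norm (u r - u s)"
proof -
  have bound: "energy x - energy y \<le> norm (\<zeta> a) * norm (u x - u y)" if "a \<le> x" "a \<le> y" for x y
  proof -
    have "energy x + \<zeta> x \<bullet> (u y - u x) \<le> energy y"
      using subdiff_ineq[OF \<zeta>_subdiff J_u] that \<open>0 < a\<close> by simp
    then have "energy x - energy y \<le> \<zeta> x \<bullet> (u x - u y)" by (simp add: inner_diff_right)
    also have "\<dots> \<le> norm (\<zeta> x) * norm (u x - u y)" by (rule norm_cauchy_schwarz)
    also have "\<dots> \<le> norm (\<zeta> a) * norm (u x - u y)"
      using norm_\<zeta>_decreasing[of a x] that \<open>0 < a\<close> by (simp add: mult_right_mono)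
    finally show ?thesis .
  qed
  show ?thesis using bound[of r s] bound[of s r] assms by (simp add: norm_minus_commute)
qed

lemma continuous_on_energy:
  assumes "0 < a"
  shows "continuous_on {a..b} energy"
  unfolding continuous_on_def
proof
  fix x assume x: "x \<in> {a..b}"
  have "(u \<longlongrightarrow> u x) (at x within {a..b})"
    using continuous_on_u[of a b] assms x unfolding continuous_on_def by auto
  then have "((\<lambda>r. norm (\<zeta> a) * norm (u r - u x)) \<longlongrightarrow> norm (\<zeta> a) * norm (u x - u x)) (at x within {a..b})"
    by (intro tendsto_intros)
  then have "((\<lambda>r. norm (\<zeta> a) * norm (u r - u x)) \<longlongrightarrow> 0) (at x within {a..b})" by simp
  then have "((\<lambda>r. energy r - energy x) \<longlongrightarrow> 0) (at x within {a..b})"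
    by (rule Lim_null_comparison[rotated])
      (use x energy_lipschitz[OF assms] in \<open>auto simp: eventually_at_filter\<close>)
  then show "(energy \<longlongrightarrow> energy x) (at x within {a..b})" by (rule LIM_zero_cancel)
qed

lemma sqnorm_right_deriv:
  assumes "0 < t"
  shows "((\<lambda>r. u r \<bullet> u r) has_real_derivative - (2 * p * energy t)) (at_right t)"
  using has_real_derivative_inner[OF u_deriv[OF assms] u_deriv[OF assms]]
    subdiff_inner_self[OF \<zeta>_subdiff[OF assms]]
  by (simp add: inner_commute mult.assoc)

lemma norm_u_decreasing:
  assumes "0 \<le> s" and "s \<le> t"
  shows "norm (u t) \<le> norm (u s)"
proof -
  have "u t \<bullet> u t \<le> u s \<bullet> u s"
  proof (rule right_DERIV_nonpos_imp_decreasing[OF \<open>s \<le> t\<close>, where f' = "\<lambda>r. - (2 * p * energy r)"])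
    show "continuous_on {s..t} (\<lambda>r. u r \<bullet> u r)"
      using continuous_on_u[OF \<open>0 \<le> s\<close>] by (intro continuous_intros)
    fix r assume "s < r" "r < t"
    then show "((\<lambda>r. u r \<bullet> u r) has_real_derivative - (2 * p * energy r)) (at_right r)"
      using \<open>0 \<le> s\<close> by (intro sqnorm_right_deriv) simp
    show "- (2 * p * energy r) \<le> 0" using energy_nonneg[of r] p_ge_1 by simp
  qed
  then show ?thesis by (simp add: norm_le)
qed

lemma u_eq_0_persists: "0 \<le> s \<Longrightarrow> s \<le> t \<Longrightarrow> u s = 0 \<Longrightarrow> u t = 0"
  using norm_u_decreasing[of s t] by simp

lemma u_orthogonal_null_set:
  assumes "0 \<le> t"
  shows "u t \<in> orthogonal_comp (null_set J)"
  unfolding orthogonal_comp_def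
proof (intro CollectI ballI)
  fix n assume "n \<in> null_set J"
  then have "J n = 0" unfolding null_set_def by simp
  have deriv: "((\<lambda>r. u r \<bullet> n) has_real_derivative 0) (at_right r)" if "0 < r" for r
    using has_real_derivative_inner[OF u_deriv[OF that] has_vector_derivative_const[of n]]
      subdiff_orthogonal_null_set[OF \<zeta>_subdiff[OF that] \<open>J n = 0\<close>] by simp
  have cont: "continuous_on {0..t} (\<lambda>r. u r \<bullet> n)"
    using continuous_on_u[of 0 t] by (intro continuous_intros) simp
  have "u t \<bullet> n \<le> u 0 \<bullet> n"
    by (rule right_DERIV_nonpos_imp_decreasing[OF assms cont, where f' = "\<lambda>r. 0"]) (auto intro: deriv)
  moreover have "- (u t \<bullet> n) \<le> - (u 0 \<bullet> n)"
  proof (rule right_DERIV_nonpos_imp_decreasing[OF assms continuous_on_minus[OF cont], where f' = "\<lambda>r. 0"])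
    fix r :: real assume "0 < r"
    show "((\<lambda>r. - (u r \<bullet> n)) has_real_derivative 0) (at_right r)"
      using DERIV_minus[OF deriv[OF \<open>0 < r\<close>]] by simp
  qed simp
  moreover have "u 0 \<bullet> n = 0"
    using u_initial \<open>n \<in> null_set J\<close> unfolding H0_def orthogonal_comp_def orthogonal_def
    by (auto simp: inner_commute)
  ultimately show "orthogonal n (u t)" unfolding orthogonal_def by (simp add: inner_commute)
qed

lemma u_in_H0: "0 \<le> t \<Longrightarrow> u t \<noteq> 0 \<Longrightarrow> u t \<in> H0 J"
  using u_orthogonal_null_set unfolding H0_def by simp

abbreviation N :: "real \<Rightarrow> real" where "N t \<equiv> u t \<bullet> u t"

abbreviation \<Lambda> :: "real \<Rightarrow> real" where "\<Lambda> t \<equiv> p * (energy t * N t powr (- p / 2))"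

abbreviation \<phi> :: "real \<Rightarrow> real" where "\<phi> t \<equiv> N t powr ((2 - p) / 2)"

lemma rayleigh_u:
  assumes "0 < t" and "u t \<noteq> 0"
  shows "rayleigh p J (u t) = ereal (\<Lambda> t)"
proof -
  have "rayleigh p J (u t) = ereal (p * energy t / norm (u t) powr p)"
    using assms J_u by (intro rayleigh_eq) auto
  also have "norm (u t) powr p = N t powr (p / 2)"
    by (rule norm_powr_eq_inner_powr)
  finally show ?thesis by (simp add: powr_minus_divide)
qed

text \<open>$\Lambda' \le 0$: after the chain rule, the sign of the derivative is that of
  $(p J(u))^2 - |\zeta|^2 |u|^2 = (\zeta \cdot u)^2 - |\zeta|^2 |u|^2$, by Euler's identity.\<close>
lemma \<Lambda>_right_deriv_nonpos:
  assumes "0 < t" and "u t \<noteq> 0"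
  obtains D where "(\<Lambda> has_real_derivative D) (at_right t)" and "D \<le> 0"
proof -
  have N_pos: "0 < N t" using assms(2) by simp
  have "((\<lambda>r. N r powr (- p / 2)) has_real_derivative
      (- p / 2) * N t powr (- p / 2 - 1) * (- (2 * p * energy t))) (at_right t)"
    using DERIV_chain[OF has_real_derivative_powr[OF N_pos, of "- p / 2"] sqnorm_right_deriv[OF assms(1)]]
    by (simp add: o_def)
  then have deriv: "(\<Lambda> has_real_derivative p * (- (\<zeta> t \<bullet> \<zeta> t) * N t powr (- p / 2)
      + (- p / 2) * N t powr (- p / 2 - 1) * (- (2 * p * energy t)) * energy t)) (at_right t)"
    by (intro DERIV_cmult DERIV_mult energy_right_deriv assms(1))
  have split: "N t powr (- p / 2) = N t * N t powr (- p / 2 - 1)"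
    using powr_add[of "N t" 1 "- p / 2 - 1"] N_pos by simp
  have "(p * energy t)\<^sup>2 \<le> (\<zeta> t \<bullet> \<zeta> t) * N t"
    using Cauchy_Schwarz_ineq[of "\<zeta> t" "u t"] subdiff_inner_self[OF \<zeta>_subdiff[OF assms(1)]] by simp
  then have "N t powr (- p / 2 - 1) * ((p * energy t)\<^sup>2 - (\<zeta> t \<bullet> \<zeta> t) * N t) \<le> 0"
    using N_pos by (simp add: mult_nonneg_nonpos)
  moreover have "- (\<zeta> t \<bullet> \<zeta> t) * N t powr (- p / 2)
      + (- p / 2) * N t powr (- p / 2 - 1) * (- (2 * p * energy t)) * energy t
      = N t powr (- p / 2 - 1) * ((p * energy t)\<^sup>2 - (\<zeta> t \<bullet> \<zeta> t) * N t)"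
    unfolding split by (simp add: algebra_simps power2_eq_square)
  ultimately show ?thesis
    using that[OF deriv] p_ge_1 by (simp add: mult_nonneg_nonpos)
qed

lemma \<phi>_right_deriv:
  assumes "0 < t" and "u t \<noteq> 0"
  shows "(\<phi> has_real_derivative - (2 - p) * \<Lambda> t) (at_right t)"
proof -
  have N_pos: "0 < N t" using assms(2) by simp
  have "(\<phi> has_real_derivative (2 - p) / 2 * N t powr ((2 - p) / 2 - 1) * (- (2 * p * energy t)))
      (at_right t)"
    using DERIV_chain[OF has_real_derivative_powr[OF N_pos, of "(2 - p) / 2"] sqnorm_right_deriv[OF assms(1)]]
    by (simp add: o_def)
  moreover have "(2 - p) / 2 - 1 = - p / 2" by (simp add: field_simps)
  then have "(2 - p) / 2 * N t powr ((2 - p) / 2 - 1) * (- (2 * p * energy t)) = - (2 - p) * \<Lambda> t"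
    by (simp add: field_simps)
  ultimately show ?thesis by simp
qed

lemma continuous_on_\<Lambda>:
  assumes "0 < a" and "\<And>r. r \<in> {a..b} \<Longrightarrow> u r \<noteq> 0"
  shows "continuous_on {a..b} \<Lambda>"
proof -
  have "continuous_on {a..b} N"
    using continuous_on_u[OF less_imp_le[OF assms(1)]] by (intro continuous_intros)
  moreover have "\<forall>r\<in>{a..b}. N r \<noteq> 0" using assms(2) by simp
  ultimately have "continuous_on {a..b} (\<lambda>r. N r powr (- p / 2))"
    by (intro continuous_on_powr continuous_on_const)
  then show ?thesis
    using continuous_on_energy[OF assms(1)] by (intro continuous_on_mult continuous_on_const)
qed

lemma continuous_on_\<phi>: "0 \<le> a \<Longrightarrow> continuous_on {a..b} \<phi>"
  using continuous_on_u p_less_2 by (intro continuous_on_powr' continuous_intros) auto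

lemma \<Lambda>_decreasing:
  assumes "0 < s" and "s \<le> t" and "u t \<noteq> 0"
  shows "\<Lambda> t \<le> \<Lambda> s"
proof -
  have nonzero: "u r \<noteq> 0" if "0 \<le> r" "r \<le> t" for r
    using u_eq_0_persists[of r t] that assms(3) by blast
  show ?thesis
  proof (rule right_Dini_nonpos_imp_decreasing[OF \<open>s \<le> t\<close> continuous_on_\<Lambda>[OF \<open>0 < s\<close>]])
    show "\<And>r. r \<in> {s..t} \<Longrightarrow> u r \<noteq> 0" using nonzero \<open>0 < s\<close> by auto
    fix x e :: real assume "s < x" "x < t" and "0 < e"
    then obtain D where "(\<Lambda> has_real_derivative D) (at_right x)" "D \<le> 0"
      using \<Lambda>_right_deriv_nonpos[of x] nonzero[of x] \<open>0 < s\<close> by auto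
    then show "\<forall>\<^sub>F y in at_right x. \<Lambda> y \<le> \<Lambda> x + e * (y - x)"
      using \<open>0 < e\<close> by (rule right_DERIV_nonpos_imp_Dini)
  qed
qed

lemma \<phi>_decrease_ge:
  assumes "0 < a" and "a \<le> b" and "\<And>r. a < r \<Longrightarrow> r < b \<Longrightarrow> u r \<noteq> 0"
    and "\<And>r. a < r \<Longrightarrow> r < b \<Longrightarrow> c \<le> \<Lambda> r"
  shows "(2 - p) * c * (b - a) \<le> \<phi> a - \<phi> b"
proof -
  have "\<phi> b + (2 - p) * c * b \<le> \<phi> a + (2 - p) * c * a"
  proof (rule right_DERIV_nonpos_imp_decreasing[OF \<open>a \<le> b\<close>,
        where f' = "\<lambda>r. - (2 - p) * \<Lambda> r + (2 - p) * c"])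
    show "continuous_on {a..b} (\<lambda>r. \<phi> r + (2 - p) * c * r)"
      by (intro continuous_on_add continuous_on_\<phi> continuous_intros) (use \<open>0 < a\<close> in auto)
    fix r assume r: "a < r" "r < b"
    then have "((\<lambda>r. \<phi> r + (2 - p) * c * r) has_real_derivative - (2 - p) * \<Lambda> r + (2 - p) * c * 1)
        (at_right r)"
      using assms(1,3) by (intro DERIV_add \<phi>_right_deriv DERIV_cmult DERIV_ident) auto
    then show "((\<lambda>r. \<phi> r + (2 - p) * c * r) has_real_derivative - (2 - p) * \<Lambda> r + (2 - p) * c) (at_right r)"
      by simp
    have "(2 - p) * c \<le> (2 - p) * \<Lambda> r" using assms(4)[OF r] p_less_2 by (intro mult_left_mono) auto
    then show "- (2 - p) * \<Lambda> r + (2 - p) * c \<le> 0" by linarith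
  qed
  then show ?thesis by (simp add: algebra_simps)
qed

lemma \<phi>_decrease_le:
  assumes "0 < a" and "a \<le> b" and "\<And>r. a < r \<Longrightarrow> r < b \<Longrightarrow> u r \<noteq> 0"
    and "\<And>r. a < r \<Longrightarrow> r < b \<Longrightarrow> \<Lambda> r \<le> c"
  shows "\<phi> a - \<phi> b \<le> (2 - p) * c * (b - a)"
proof -
  have "- \<phi> b - (2 - p) * c * b \<le> - \<phi> a - (2 - p) * c * a"
  proof (rule right_DERIV_nonpos_imp_decreasing[OF \<open>a \<le> b\<close>,
        where f' = "\<lambda>r. (2 - p) * \<Lambda> r - (2 - p) * c"])
    show "continuous_on {a..b} (\<lambda>r. - \<phi> r - (2 - p) * c * r)"
      by (intro continuous_on_diff continuous_on_minus continuous_on_\<phi> continuous_intros)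
        (use \<open>0 < a\<close> in auto)
    fix r assume r: "a < r" "r < b"
    then have "((\<lambda>r. - \<phi> r - (2 - p) * c * r) has_real_derivative - (- (2 - p) * \<Lambda> r) - (2 - p) * c * 1)
        (at_right r)"
      using assms(1,3) by (intro DERIV_diff DERIV_minus \<phi>_right_deriv DERIV_cmult DERIV_ident) auto
    moreover have "- (- (2 - p) * \<Lambda> r) - (2 - p) * c * 1 = (2 - p) * \<Lambda> r - (2 - p) * c"
      by (simp only: mult_minus_left minus_minus mult_1_right)
    ultimately show "((\<lambda>r. - \<phi> r - (2 - p) * c * r) has_real_derivative (2 - p) * \<Lambda> r - (2 - p) * c) (at_right r)"
      by (simp only:)
    have "(2 - p) * \<Lambda> r \<le> (2 - p) * c" using assms(4)[OF r] p_less_2 by (intro mult_left_mono) auto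
    then show "(2 - p) * \<Lambda> r - (2 - p) * c \<le> 0" by linarith
  qed
  then show ?thesis by (simp add: algebra_simps)
qed

end

section \<open>Finite extinction and the limit of the Rayleigh quotient\<close>

locale coercive_subgradient_flow = subgradient_flow +
  assumes lambda1_pos: "0 < lambda1 p J"
begin

abbreviation T :: real where "T \<equiv> extinction_time u"

definition lam1 :: real where "lam1 = real_of_ereal (lambda1 p J)"

lemma u_0_nonzero: "u 0 \<noteq> 0"
  using u_initial unfolding H0_def by simp

lemma u_nonzero_near_0: "\<exists>t>0. u t \<noteq> 0"
proof -
  have "continuous (at 0 within {0..}) u"
    using u_cont by (simp add: continuous_on_eq_continuous_within)
  then have "(u \<longlongrightarrow> u 0) (at_right 0)"
    by (simp add: continuous_within at_within_Ici_at_right)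
  then have "\<forall>\<^sub>F t in at_right 0. u t \<noteq> 0" using u_0_nonzero by (rule tendsto_imp_eventually_ne)
  then obtain b where "0 < b" and b: "\<And>t. 0 < t \<Longrightarrow> t < b \<Longrightarrow> u t \<noteq> 0"
    unfolding eventually_at_right_field by auto
  then show ?thesis using b[of "b / 2"] by (intro exI[of _ "b / 2"]) auto
qed

lemma lambda1_eq: "lambda1 p J = ereal lam1" and lam1_pos: "0 < lam1"
proof -
  obtain t where "0 < t" "u t \<noteq> 0" using u_nonzero_near_0 by blast
  then have "lambda1 p J \<le> ereal (\<Lambda> t)"
    using lambda1_le_rayleigh[of "u t" J p] u_in_H0[of t] rayleigh_u[of t] by simp
  then show "lambda1 p J = ereal lam1" "0 < lam1"
    using lambda1_pos unfolding lam1_def by (cases "lambda1 p J"; simp)+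
qed

lemma lam1_le_\<Lambda>: "0 < t \<Longrightarrow> u t \<noteq> 0 \<Longrightarrow> lam1 \<le> \<Lambda> t"
  using lambda1_le_rayleigh[of "u t" J p] u_in_H0[of t] rayleigh_u[of t] lambda1_eq by simp

text \<open>Finite extinction: while $u \ne 0$, $\phi = |u|^{2-p}$ decreases at least at rate
  $(2 - p)\lambda_1 > 0$.\<close>
lemma u_vanishes: "\<exists>t>0. u t = 0"
proof (rule ccontr)
  assume "\<not> ?thesis"
  then have nonzero: "u t \<noteq> 0" if "0 < t" for t using that by auto
  define c where "c = (2 - p) * lam1"
  define t where "t = 2 + \<phi> 1 / c"
  have "0 < c" unfolding c_def using lam1_pos p_less_2 by simp
  then have "1 \<le> t" unfolding t_def by (simp add: divide_nonneg_pos)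
  then have "c * (t - 1) \<le> \<phi> 1 - \<phi> t"
    unfolding c_def using nonzero lam1_le_\<Lambda> by (intro \<phi>_decrease_ge) auto
  moreover have "c * (t - 1) = c + \<phi> 1"
    unfolding t_def using \<open>0 < c\<close> by (simp add: algebra_simps)
  moreover have "0 \<le> \<phi> t" by simp
  ultimately show False using \<open>0 < c\<close> by linarith
qed

lemma extinction_time_vanishing:
  assumes "T \<le> t"
  shows "u t = 0"
proof -
  define S where "S = {T. T > 0 \<and> (\<forall>t\<ge>T. u t = 0)}"
  have "T = Inf S" unfolding extinction_time_def S_def ..
  obtain t\<^sub>0 where "0 < t\<^sub>0" "u t\<^sub>0 = 0" using u_vanishes by blast
  then have "t\<^sub>0 \<in> S"
    using u_eq_0_persists[OF less_imp_le[OF \<open>0 < t\<^sub>0\<close>]] unfolding S_def by blast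
  then have "S \<noteq> {}" by blast
  have "0 \<le> T" unfolding \<open>T = Inf S\<close> using \<open>S \<noteq> {}\<close> by (intro cInf_greatest) (auto simp: S_def)
  have "{T<..} \<subseteq> {t\<in>{0..}. u t = 0}"
  proof
    fix t assume "t \<in> {T<..}"
    then obtain s where "s \<in> S" "s < t" using cInf_lessD[OF \<open>S \<noteq> {}\<close>, of t] \<open>T = Inf S\<close> by auto
    then show "t \<in> {t\<in>{0..}. u t = 0}" unfolding S_def by auto
  qed
  moreover have "closed {t\<in>{0..}. u t = 0}"
    using u_cont by (rule continuous_closed_preimage_constant) simp
  ultimately have "closure {T<..} \<subseteq> {t\<in>{0..}. u t = 0}" by (rule closure_minimal)
  then show ?thesis using assms by auto
qed

lemma extinction_time_pos: "0 < T"
  using extinction_time_vanishing[of 0] u_0_nonzero by (cases "T \<le> 0") auto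

lemma u_nonzero_before_extinction:
  assumes "0 \<le> t" and "t < T"
  shows "u t \<noteq> 0"
proof
  assume "u t = 0"
  with u_0_nonzero have "0 < t" using assms(1) by (cases "t = 0") auto
  then have "t \<in> {T. T > 0 \<and> (\<forall>t\<ge>T. u t = 0)}"
    using u_eq_0_persists[OF less_imp_le[OF \<open>0 < t\<close>] _ \<open>u t = 0\<close>] by blast
  then have "T \<le> t" unfolding extinction_time_def by (intro cInf_lower bdd_belowI[of _ 0]) auto
  then show False using assms(2) by simp
qed

definition \<Lambda>_lim :: real where "\<Lambda>_lim = Inf (\<Lambda> ` {0<..<T})"

lemma \<Lambda>_lim_le: "0 < t \<Longrightarrow> t < T \<Longrightarrow> \<Lambda>_lim \<le> \<Lambda> t"
  unfolding \<Lambda>_lim_def using lam1_le_\<Lambda> u_nonzero_before_extinction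
  by (intro cInf_lower bdd_belowI[of _ lam1]) auto

lemma lam1_le_\<Lambda>_lim: "lam1 \<le> \<Lambda>_lim"
  unfolding \<Lambda>_lim_def using extinction_time_pos lam1_le_\<Lambda> u_nonzero_before_extinction
  by (intro cInf_greatest) (auto intro!: exI[of _ "T / 2"])

lemma \<Lambda>_tendsto: "(\<Lambda> \<longlongrightarrow> \<Lambda>_lim) (at_left T)"
proof (rule order_tendstoI)
  fix a assume "a < \<Lambda>_lim"
  then show "\<forall>\<^sub>F t in at_left T. a < \<Lambda> t"
    unfolding eventually_at_left_field using extinction_time_pos \<Lambda>_lim_le
    by (intro exI[of _ 0]) (auto intro: less_le_trans)
next
  fix a assume "\<Lambda>_lim < a"
  have "\<Lambda> ` {0<..<T} \<noteq> {}" using extinction_time_pos by (auto intro!: exI[of _ "T / 2"])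
  then obtain s where s: "s \<in> {0<..<T}" "\<Lambda> s < a"
    using cInf_lessD[of "\<Lambda> ` {0<..<T}" a] \<open>\<Lambda>_lim < a\<close> unfolding \<Lambda>_lim_def by auto
  show "\<forall>\<^sub>F t in at_left T. \<Lambda> t < a"
    unfolding eventually_at_left_field
  proof (intro exI[of _ s] conjI allI impI)
    fix t assume "s < t" "t < T"
    then show "\<Lambda> t < a"
      using \<Lambda>_decreasing[of s t] u_nonzero_before_extinction[of t] s by auto
  qed (use s in auto)
qed

lemma \<phi>_ge_extinction:
  assumes "0 < t" and "t < T"
  shows "(2 - p) * \<Lambda>_lim * (T - t) \<le> \<phi> t"
  using \<phi>_decrease_ge[of t T \<Lambda>_lim] assms u_nonzero_before_extinction \<Lambda>_lim_le
    extinction_time_vanishing[of T] by simp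

lemma \<phi>_le_extinction:
  assumes "0 < t" and "t < T"
  shows "\<phi> t \<le> (2 - p) * \<Lambda> t * (T - t)"
  using \<phi>_decrease_le[of t T "\<Lambda> t"] assms u_nonzero_before_extinction \<Lambda>_decreasing
    extinction_time_vanishing[of T] by simp

text \<open>$\lambda_1 \rho^{p-1} e$ is the gradient at $\rho e$ of $\lambda_1 |v|^p / p$, which lies below $J$
  on $\mathcal N(J)^\perp$ and touches it at $\rho e$; so it pairs monotonically with
  the subgradients of $J$ along the flow.\<close>
lemma \<zeta>_monotone_ground_state_ray:
  assumes "norm e = 1" and "J e = ereal (lam1 / p)" and "0 < t" and "0 < \<rho>"
  shows "0 \<le> (\<zeta> t - (lam1 * \<rho> powr (p - 1)) *\<^sub>R e) \<bullet> (u t - \<rho> *\<^sub>R e)"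
proof -
  have "J (\<rho> *\<^sub>R e) = ereal (lam1 / p * \<rho> powr p)"
    using J_scaleR_pos[OF \<open>0 < \<rho>\<close>] assms(2) by (simp add: mult.commute)
  then have upper: "energy t + \<zeta> t \<bullet> (\<rho> *\<^sub>R e - u t) \<le> lam1 / p * \<rho> powr p"
    using subdiff_ineq[OF \<zeta>_subdiff[OF \<open>0 < t\<close>]] by blast
  have "ereal (lam1 / p * \<rho> powr p + lam1 * \<rho> powr (p - 1) * (e \<bullet> u t - \<rho>)) \<le> J (u t)"
    using J_ge_tangent_bound[OF assms(1) u_orthogonal_null_set assms(4)] lambda1_eq lam1_pos p_ge_1
      \<open>0 < t\<close> by simp
  then have lower: "lam1 / p * \<rho> powr p + lam1 * \<rho> powr (p - 1) * (e \<bullet> u t - \<rho>) \<le> energy t"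
    by (subst (asm) J_u[OF \<open>0 < t\<close>]) simp
  have "e \<bullet> e = 1" using \<open>norm e = 1\<close> by (simp add: norm_eq_1)
  then have "(lam1 * \<rho> powr (p - 1)) *\<^sub>R e \<bullet> (u t - \<rho> *\<^sub>R e) = lam1 * \<rho> powr (p - 1) * (e \<bullet> u t - \<rho>)"
    by (simp add: inner_diff_right algebra_simps)
  moreover have "\<zeta> t \<bullet> (u t - \<rho> *\<^sub>R e) = - (\<zeta> t \<bullet> (\<rho> *\<^sub>R e - u t))"
    by (simp add: inner_diff_right)
  ultimately show ?thesis
    using upper lower by (simp only: inner_diff_left)
qed

text \<open>The explicit solution of the flow of $\lambda_1 |v|^p / p$ through the ray of $e$.\<close>
definition ground_state_curve :: "real \<Rightarrow> 'a \<Rightarrow> real \<Rightarrow> 'a" where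
  "ground_state_curve \<kappa> e t = (\<kappa> - (2 - p) * lam1 * t) powr (1 / (2 - p)) *\<^sub>R e"

lemma ground_state_curve_deriv:
  assumes "0 < \<kappa> - (2 - p) * lam1 * t"
  shows "(ground_state_curve \<kappa> e has_vector_derivative
      - ((lam1 * ((\<kappa> - (2 - p) * lam1 * t) powr (1 / (2 - p))) powr (p - 1)) *\<^sub>R e)) (at t)"
proof -
  define D where "D = \<kappa> - (2 - p) * lam1 * t"
  define q where "q = 1 / (2 - p)"
  have lin: "((\<lambda>t. \<kappa> - (2 - p) * lam1 * t) has_real_derivative - ((2 - p) * lam1)) (at t)"
    by (auto intro!: derivative_eq_intros)
  have chain: "((\<lambda>t. (\<kappa> - (2 - p) * lam1 * t) powr q) has_real_derivative
      q * D powr (q - 1) * - ((2 - p) * lam1)) (at t)"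
    using DERIV_chain[OF has_real_derivative_powr[OF assms, of q] lin] unfolding D_def by (simp add: o_def)
  have "q * (p - 1) = q - 1" unfolding q_def using p_less_2 by (simp add: field_simps)
  then have "q * D powr (q - 1) * - ((2 - p) * lam1) = - (lam1 * (D powr q) powr (p - 1))"
    unfolding q_def using p_less_2 by (simp add: powr_powr)
  then have "((\<lambda>t. (\<kappa> - (2 - p) * lam1 * t) powr q) has_real_derivative
      - (lam1 * (D powr q) powr (p - 1))) (at t)"
    using chain by (simp only:)
  from has_vector_derivative_scaleR[OF this has_vector_derivative_const[of e]]
  show ?thesis unfolding ground_state_curve_def D_def q_def by simp
qed

lemma norm_diff_ground_state_curve_decreasing:
  assumes "norm e = 1" and "J e = ereal (lam1 / p)" and "0 < s" and "s \<le> t"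
    and "0 < \<kappa> - (2 - p) * lam1 * t"
  shows "norm (u t - ground_state_curve \<kappa> e t) \<le> norm (u s - ground_state_curve \<kappa> e s)"
proof -
  define \<rho> where "\<rho> r = (\<kappa> - (2 - p) * lam1 * r) powr (1 / (2 - p))" for r
  have pos: "0 < \<kappa> - (2 - p) * lam1 * r" if "r \<le> t" for r
  proof -
    have "(2 - p) * lam1 * r \<le> (2 - p) * lam1 * t"
      using that p_less_2 lam1_pos by (intro mult_left_mono) auto
    then show ?thesis using assms(5) by linarith
  qed
  have deriv: "(ground_state_curve \<kappa> e has_vector_derivative - ((lam1 * \<rho> r powr (p - 1)) *\<^sub>R e)) (at r)"
    if "r \<le> t" for r
    unfolding \<rho>_def using pos[OF that] by (rule ground_state_curve_deriv)
  show ?thesis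
  proof (rule monotone_velocities_contract[OF \<open>s \<le> t\<close>, where a = \<zeta> and b = "\<lambda>r. (lam1 * \<rho> r powr (p - 1)) *\<^sub>R e"])
    show "continuous_on {s..t} u" using continuous_on_u \<open>0 < s\<close> by simp
    show "continuous_on {s..t} (ground_state_curve \<kappa> e)"
      using deriv by (intro continuous_at_imp_continuous_on ballI has_vector_derivative_continuous) auto
    fix r assume r: "s < r" "r < t"
    show "(u has_vector_derivative - \<zeta> r) (at_right r)" using u_deriv r \<open>0 < s\<close> by simp
    show "(ground_state_curve \<kappa> e has_vector_derivative - ((lam1 * \<rho> r powr (p - 1)) *\<^sub>R e)) (at_right r)"
      using deriv[of r] r by (simp add: has_vector_derivative_at_within)
    have "0 < \<rho> r" unfolding \<rho>_def using pos[of r] r by simp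
    then show "0 \<le> (\<zeta> r - (lam1 * \<rho> r powr (p - 1)) *\<^sub>R e) \<bullet> (u r - ground_state_curve \<kappa> e r)"
      using \<zeta>_monotone_ground_state_ray[OF assms(1,2)] r \<open>0 < s\<close>
      unfolding ground_state_curve_def \<rho>_def by simp
  qed
qed

end

section \<open>Asymptotic profiles\<close>

locale asymptotic_profile = coercive_subgradient_flow +
  fixes tk :: "nat \<Rightarrow> real" and w_star :: 'a
  assumes tk_strict_mono: "strict_mono tk"
    and tk_range: "\<And>k. 0 \<le> tk k \<and> tk k < extinction_time u"
    and tk_tendsto: "tk \<longlonglongrightarrow> extinction_time u"
    and rescaled_tendsto:
      "(\<lambda>k. (1 / (1 - tk k / extinction_time u) powr (1 / (2 - p))) *\<^sub>R u (tk k)) \<longlonglongrightarrow> w_star"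
begin

definition scale_factor :: "nat \<Rightarrow> real" where "scale_factor k = (1 - tk k / T) powr (1 / (2 - p))"

definition w :: "nat \<Rightarrow> 'a" where "w k = (1 / scale_factor k) *\<^sub>R u (tk k)"

abbreviation W :: real where "W \<equiv> norm w_star"

lemma w_tendsto: "w \<longlonglongrightarrow> w_star"
  using rescaled_tendsto unfolding w_def scale_factor_def .

lemma tk_pos: "1 \<le> k \<Longrightarrow> 0 < tk k"
  using strict_monoD[OF tk_strict_mono, of 0 k] tk_range[of 0] by simp

lemma tk_less_T: "tk k < T"
  using tk_range by simp

lemma scale_factor_powr: "scale_factor k powr (2 - p) = 1 - tk k / T"
  using tk_less_T[of k] extinction_time_pos p_less_2 unfolding scale_factor_def by (simp add: powr_powr)

lemma scale_factor_pos: "0 < scale_factor k"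
  using tk_less_T[of k] extinction_time_pos unfolding scale_factor_def by simp

lemma u_tk: "u (tk k) = scale_factor k *\<^sub>R w k"
  unfolding w_def using scale_factor_pos[of k] by simp

lemma norm_w_powr: "norm (w k) powr (2 - p) = \<phi> (tk k) * T / (T - tk k)"
proof -
  have "norm (w k) powr (2 - p) = norm (u (tk k)) powr (2 - p) / scale_factor k powr (2 - p)"
    unfolding w_def using scale_factor_pos[of k] by (simp add: powr_divide)
  also have "norm (u (tk k)) powr (2 - p) = \<phi> (tk k)"
    by (rule norm_powr_eq_inner_powr)
  finally show ?thesis
    using extinction_time_pos tk_less_T[of k] unfolding scale_factor_powr by (simp add: field_simps)
qed

lemma norm_w_powr_bounds:
  assumes "1 \<le> k"
  shows "(2 - p) * \<Lambda>_lim * T \<le> norm (w k) powr (2 - p)"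
    and "norm (w k) powr (2 - p) \<le> (2 - p) * \<Lambda> (tk k) * T"
proof -
  have "0 < T / (T - tk k)" using extinction_time_pos tk_less_T[of k] by simp
  then show "(2 - p) * \<Lambda>_lim * T \<le> norm (w k) powr (2 - p)"
    using mult_right_mono[OF \<phi>_ge_extinction[OF tk_pos[OF assms] tk_less_T], of "T / (T - tk k)"]
      tk_less_T[of k] unfolding norm_w_powr by simp
  show "norm (w k) powr (2 - p) \<le> (2 - p) * \<Lambda> (tk k) * T"
    using mult_right_mono[OF \<phi>_le_extinction[OF tk_pos[OF assms] tk_less_T], of "T / (T - tk k)"]
      \<open>0 < T / (T - tk k)\<close> tk_less_T[of k] unfolding norm_w_powr by simp
qed

lemma \<Lambda>_tk_tendsto: "(\<lambda>k. \<Lambda> (tk k)) \<longlonglongrightarrow> \<Lambda>_lim"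
proof -
  have "filterlim tk (at_left T) sequentially"
    using tk_tendsto by (rule tendsto_imp_filterlim_at_left) (use tk_less_T in auto)
  then show ?thesis by (rule filterlim_compose[OF \<Lambda>_tendsto])
qed

lemma W_powr: "W powr (2 - p) = (2 - p) * \<Lambda>_lim * T"
proof (rule LIMSEQ_unique)
  show "(\<lambda>k. norm (w k) powr (2 - p)) \<longlonglongrightarrow> W powr (2 - p)"
    using w_tendsto p_less_2 by (intro tendsto_powr' tendsto_norm tendsto_const) auto
  show "(\<lambda>k. norm (w k) powr (2 - p)) \<longlonglongrightarrow> (2 - p) * \<Lambda>_lim * T"
  proof (rule tendsto_sandwich[OF _ _ tendsto_const])
    show "\<forall>\<^sub>F k in sequentially. (2 - p) * \<Lambda>_lim * T \<le> norm (w k) powr (2 - p)"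
      using eventually_ge_at_top[of 1] by eventually_elim (rule norm_w_powr_bounds)
    show "\<forall>\<^sub>F k in sequentially. norm (w k) powr (2 - p) \<le> (2 - p) * \<Lambda> (tk k) * T"
      using eventually_ge_at_top[of 1] by eventually_elim (rule norm_w_powr_bounds)
    show "(\<lambda>k. (2 - p) * \<Lambda> (tk k) * T) \<longlonglongrightarrow> (2 - p) * \<Lambda>_lim * T"
      by (intro tendsto_intros \<Lambda>_tk_tendsto)
  qed
qed

lemma W_pos: "0 < W"
proof -
  have "0 < (2 - p) * \<Lambda>_lim * T"
    using p_less_2 lam1_pos lam1_le_\<Lambda>_lim extinction_time_pos by simp
  then have "W \<noteq> 0" using W_powr by auto
  then show ?thesis by simp
qed

lemma w_star_H0: "w_star \<in> H0 J"
proof -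
  have "n \<bullet> w_star = 0" if "n \<in> null_set J" for n
  proof (rule LIMSEQ_unique)
    show "(\<lambda>k. n \<bullet> w k) \<longlonglongrightarrow> n \<bullet> w_star" using w_tendsto by (intro tendsto_intros)
    have "n \<bullet> u (tk k) = 0" for k
      using u_orthogonal_null_set[of "tk k"] tk_range[of k] that
      unfolding orthogonal_comp_def orthogonal_def by blast
    then show "(\<lambda>k. n \<bullet> w k) \<longlonglongrightarrow> 0" unfolding w_def by simp
  qed
  then show ?thesis using W_pos unfolding H0_def orthogonal_comp_def orthogonal_def by auto
qed

lemma J_w:
  assumes "1 \<le> k"
  shows "J (w k) = ereal (\<Lambda> (tk k) * norm (w k) powr p / p)"
proof -
  have "0 < tk k" using tk_pos[OF assms] .
  then have "0 < N (tk k)" using u_nonzero_before_extinction[of "tk k"] tk_less_T by simp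
  have "J (w k) = ereal ((1 / scale_factor k) powr p) * J (u (tk k))"
    unfolding w_def using scale_factor_pos[of k] by (intro J_scaleR_pos) simp
  also have "\<dots> = ereal ((1 / scale_factor k) powr p * energy (tk k))"
    by (subst J_u[OF \<open>0 < tk k\<close>]) simp
  also have "(1 / scale_factor k) powr p * energy (tk k) = \<Lambda> (tk k) * norm (w k) powr p / p"
  proof -
    have "norm (w k) = norm (u (tk k)) / scale_factor k"
      unfolding w_def using scale_factor_pos[of k] by simp
    then have "norm (w k) powr p = N (tk k) powr (p / 2) / scale_factor k powr p"
      by (simp add: powr_divide norm_powr_eq_inner_powr)
    moreover have "N (tk k) powr (- p / 2) * N (tk k) powr (p / 2) = 1"
      using \<open>0 < N (tk k)\<close> by (simp add: powr_add[symmetric])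
    ultimately show ?thesis using p_ge_1 by (simp add: powr_divide field_simps)
  qed
  finally show ?thesis .
qed

lemma J_w_star_le: "J w_star \<le> ereal (\<Lambda>_lim * W powr p / p)"
proof (rule lower_semicont_imp_le_limit[OF _ w_tendsto])
  show "lower_semicont J" using admissible unfolding admissible_def by blast
  have "(\<lambda>k. \<Lambda> (tk k) * norm (w k) powr p / p) \<longlonglongrightarrow> \<Lambda>_lim * W powr p / p"
    using W_pos p_ge_1 by (intro tendsto_intros \<Lambda>_tk_tendsto tendsto_powr' w_tendsto) auto
  then have "(\<lambda>k. ereal (\<Lambda> (tk k) * norm (w k) powr p / p)) \<longlonglongrightarrow> ereal (\<Lambda>_lim * W powr p / p)"
    by (rule tendsto_ereal)
  then show "(\<lambda>k. J (w k)) \<longlonglongrightarrow> ereal (\<Lambda>_lim * W powr p / p)"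
    by (rule Lim_transform_eventually)
      (use eventually_ge_at_top[of 1] in \<open>eventually_elim, simp add: J_w\<close>)
qed

definition w_dir :: 'a where "w_dir = (1 / W) *\<^sub>R w_star"

definition \<kappa> :: "nat \<Rightarrow> real" where
  "\<kappa> k = (scale_factor k * W) powr (2 - p) + (2 - p) * lam1 * tk k"

lemma norm_w_dir: "norm w_dir = 1"
  unfolding w_dir_def using W_pos by simp

lemma J_w_dir:
  assumes "J w_star = ereal (lam1 / p * W powr p)"
  shows "J w_dir = ereal (lam1 / p)"
  unfolding w_dir_def using J_scaleR_pos[of "1 / W" w_star] W_pos assms by (simp add: powr_divide)

lemma scale_factor_W_powr: "(scale_factor k * W) powr (2 - p) = (2 - p) * \<Lambda>_lim * (T - tk k)"
proof -
  have "(scale_factor k * W) powr (2 - p) = scale_factor k powr (2 - p) * W powr (2 - p)"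
    using scale_factor_pos[of k] W_pos by (simp add: powr_mult)
  also have "\<dots> = (2 - p) * \<Lambda>_lim * ((1 - tk k / T) * T)"
    unfolding scale_factor_powr W_powr by (simp only: ac_simps)
  also have "(1 - tk k / T) * T = T - tk k" using extinction_time_pos by (simp add: field_simps)
  finally show ?thesis .
qed

lemma \<kappa>_at_T: "\<kappa> k - (2 - p) * lam1 * T = (2 - p) * (\<Lambda>_lim - lam1) * T * (1 - tk k / T)"
  unfolding \<kappa>_def scale_factor_W_powr using extinction_time_pos by (simp add: field_simps)

lemma ground_state_curve_at_tk: "ground_state_curve (\<kappa> k) w_dir (tk k) = scale_factor k *\<^sub>R w_star"
proof -
  have "(\<kappa> k - (2 - p) * lam1 * tk k) powr (1 / (2 - p)) = scale_factor k * W"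
    unfolding \<kappa>_def using scale_factor_pos[of k] W_pos p_less_2 by (simp add: powr_powr)
  then show ?thesis unfolding ground_state_curve_def w_dir_def using W_pos by simp
qed

lemma norm_ground_state_curve_at_T:
  assumes "lam1 \<le> \<Lambda>_lim"
  shows "norm (ground_state_curve (\<kappa> k) w_dir T)
    = ((2 - p) * (\<Lambda>_lim - lam1) * T) powr (1 / (2 - p)) * scale_factor k"
proof -
  have "0 \<le> (2 - p) * (\<Lambda>_lim - lam1) * T" "0 \<le> 1 - tk k / T"
    using assms p_less_2 extinction_time_pos tk_less_T[of k] by simp_all
  then show ?thesis
    unfolding ground_state_curve_def \<kappa>_at_T scale_factor_def norm_scaleR norm_w_dir
    by (simp add: powr_mult)
qed

text \<open>If $w_*$ is a ground state, compare $u$ from time $t_k$ on with the explicit solution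
  along the ray of $w_*$ that starts at $a(t_k) w_*$, close to $u(t_k) = a(t_k) w(t_k)$. If
  $\Lambda_\infty > \lambda_1$, that solution is still at distance $c\, a(t_k)$ from $0 = u(T)$ at
  time $T$, with $c > 0$ independent of $k$, whereas contraction bounds this distance by
  $a(t_k) |w(t_k) - w_*|$.\<close>
lemma \<Lambda>_lim_le_lam1_if_ground_state:
  assumes "J w_star = ereal (lam1 / p * W powr p)"
  shows "\<Lambda>_lim \<le> lam1"
proof (rule ccontr)
  assume "\<not> \<Lambda>_lim \<le> lam1"
  define c where "c = ((2 - p) * (\<Lambda>_lim - lam1) * T) powr (1 / (2 - p))"
  have "0 < c" unfolding c_def using \<open>\<not> \<Lambda>_lim \<le> lam1\<close> p_less_2 extinction_time_pos by simp
  then obtain K where K: "\<And>k. K \<le> k \<Longrightarrow> dist (w k) w_star < c"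
    using tendstoD[OF w_tendsto] unfolding eventually_sequentially by blast
  define k where "k = max K 1"
  have "1 \<le> k" unfolding k_def by simp
  have "0 < \<kappa> k - (2 - p) * lam1 * T"
    unfolding \<kappa>_at_T using \<open>\<not> \<Lambda>_lim \<le> lam1\<close> p_less_2 extinction_time_pos tk_less_T[of k] by simp
  then have "norm (u T - ground_state_curve (\<kappa> k) w_dir T)
      \<le> norm (u (tk k) - ground_state_curve (\<kappa> k) w_dir (tk k))"
    using tk_pos[OF \<open>1 \<le> k\<close>] tk_less_T[of k] norm_w_dir J_w_dir[OF assms]
    by (intro norm_diff_ground_state_curve_decreasing) auto
  then have "c * scale_factor k \<le> scale_factor k * norm (w k - w_star)"
    using norm_ground_state_curve_at_T[of k] \<open>\<not> \<Lambda>_lim \<le> lam1\<close> extinction_time_vanishing[of T]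
      scale_factor_pos[of k] unfolding ground_state_curve_at_tk u_tk c_def
    by (simp add: scaleR_diff_right[symmetric])
  then have "c \<le> norm (w k - w_star)" using scale_factor_pos[of k] by (simp add: mult.commute)
  then show False using K[of k] unfolding k_def by (simp add: dist_norm)
qed

lemma rayleigh_tendsto: "((\<lambda>t. rayleigh p J (u t)) \<longlongrightarrow> ereal \<Lambda>_lim) (at_left T)"
proof (rule Lim_transform_eventually)
  show "((\<lambda>t. ereal (\<Lambda> t)) \<longlongrightarrow> ereal \<Lambda>_lim) (at_left T)"
    using \<Lambda>_tendsto by (rule tendsto_ereal)
  show "\<forall>\<^sub>F t in at_left T. ereal (\<Lambda> t) = rayleigh p J (u t)"
    unfolding eventually_at_left_field using extinction_time_pos rayleigh_u u_nonzero_before_extinction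
    by (intro exI[of _ 0]) auto
qed

lemma ground_state_iff_\<Lambda>_lim: "ground_state p J w_star \<longleftrightarrow> \<Lambda>_lim = lam1"
proof -
  have "w_star \<noteq> 0" and "0 < p" using W_pos p_ge_1 by auto
  have "ground_state p J w_star \<longleftrightarrow> J w_star \<le> ereal (lam1 / p * W powr p)"
    using ground_state_iff_rayleigh_le[OF w_star_H0, of p]
      rayleigh_le_iff[OF \<open>w_star \<noteq> 0\<close> \<open>0 < p\<close> J_neq_MInf, where L = lam1] lambda1_eq by simp
  also have "\<dots> \<longleftrightarrow> J w_star = ereal (lam1 / p * W powr p)"
    using J_ge_lambda1_norm_powr[of w_star lam1] w_star_H0 lambda1_eq \<open>0 < p\<close>
    unfolding H0_def by (auto simp: mult.commute)
  also have "\<dots> \<longleftrightarrow> \<Lambda>_lim = lam1"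
  proof
    assume "J w_star = ereal (lam1 / p * W powr p)"
    then show "\<Lambda>_lim = lam1" using \<Lambda>_lim_le_lam1_if_ground_state lam1_le_\<Lambda>_lim by simp
  next
    assume "\<Lambda>_lim = lam1"
    then have "J w_star \<le> ereal (lam1 / p * W powr p)" using J_w_star_le by simp
    then show "J w_star = ereal (lam1 / p * W powr p)"
      using J_ge_lambda1_norm_powr[of w_star lam1] w_star_H0 lambda1_eq \<open>0 < p\<close>
      unfolding H0_def by (auto simp: mult.commute)
  qed
  finally show ?thesis .
qed

theorem ground_state_iff_rayleigh_tendsto_lambda1:
  "ground_state p J w_star \<longleftrightarrow> ((\<lambda>t. rayleigh p J (u t)) \<longlongrightarrow> lambda1 p J) (at_left T)"
proof -
  have "((\<lambda>t. rayleigh p J (u t)) \<longlongrightarrow> lambda1 p J) (at_left T) \<longleftrightarrow> \<Lambda>_lim = lam1"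
  proof
    assume "((\<lambda>t. rayleigh p J (u t)) \<longlongrightarrow> lambda1 p J) (at_left T)"
    then have "lambda1 p J = ereal \<Lambda>_lim"
      using rayleigh_tendsto by (rule tendsto_unique[rotated]) simp
    then show "\<Lambda>_lim = lam1" using lambda1_eq by simp
  qed (use rayleigh_tendsto lambda1_eq in simp)
  then show ?thesis using ground_state_iff_\<Lambda>_lim by simp
qed

end

lemma gradient_flow_imp_subgradient_flow:
  assumes "admissible p J" and "1 \<le> p" and "p < 2" and "f \<in> H0 J" and "gradient_flow J f u"
  obtains \<zeta> where "subgradient_flow p J u \<zeta>"
proof -
  have "\<forall>t. \<exists>z. 0 < t \<longrightarrow> min_norm_subgrad J (u t) z \<and> (u has_vector_derivative - z) (at_right t)"
    using assms(5) unfolding gradient_flow_def at_within_Ici_at_right by blast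
  then obtain \<zeta> where "\<And>t. 0 < t \<Longrightarrow> min_norm_subgrad J (u t) (\<zeta> t) \<and> (u has_vector_derivative - \<zeta> t) (at_right t)"
    by metis
  then show ?thesis
    using assms by (intro that subgradient_flow.intro subgradient_flow_axioms.intro admissible_functional.intro)
      (auto simp: gradient_flow_def)
qed

theorem corollary6:
  fixes J :: "'a::{real_inner,complete_space} \<Rightarrow> ereal"
    and p :: real and f w_star :: 'a and u :: "real \<Rightarrow> 'a"
  assumes p: "1 \<le> p" "p < 2"
    and J: "admissible p J"
    and coercive: "lambda1 p J > 0"
    and f: "f \<in> H0 J"
    and flow: "gradient_flow J f u"
    and profile: "\<exists>tk :: nat \<Rightarrow> real. strict_mono tk \<and> (\<forall>k. 0 \<le> tk k \<and> tk k < extinction_time u) \<and>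
        tk \<longlonglongrightarrow> extinction_time u \<and>
        (\<lambda>k. (1 / (1 - tk k / extinction_time u) powr (1 / (2 - p))) *\<^sub>R u (tk k)) \<longlonglongrightarrow> w_star"
  shows "ground_state p J w_star \<longleftrightarrow>
         ((\<lambda>t. rayleigh p J (u t)) \<longlongrightarrow> lambda1 p J) (at_left (extinction_time u))"
proof -
  obtain \<zeta> where "subgradient_flow p J u \<zeta>"
    using gradient_flow_imp_subgradient_flow[OF J p f flow] .
  moreover obtain tk where "strict_mono tk" "\<And>k. 0 \<le> tk k \<and> tk k < extinction_time u"
    "tk \<longlonglongrightarrow> extinction_time u"
    "(\<lambda>k. (1 / (1 - tk k / extinction_time u) powr (1 / (2 - p))) *\<^sub>R u (tk k)) \<longlonglongrightarrow> w_star"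
    using profile by blast
  ultimately interpret asymptotic_profile p J u \<zeta> tk w_star
    using coercive by (intro asymptotic_profile.intro coercive_subgradient_flow.intro
        coercive_subgradient_flow_axioms.intro asymptotic_profile_axioms.intro) auto
  show ?thesis by (rule ground_state_iff_rayleigh_tendsto_lambda1)
qed

end
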